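(* Let $\Pi$ be a finite set of proposition symbols and $I=[a]$ with $a$ a positive integer. Every $(\Pi,I)$-formula $\varphi$ of graded multimodal logic of modal depth $n$ is logically equivalent to a recursively enumerable disjunction of full graded multimodal $(\Pi,I)$-types of modal depth $n$; i.e., there is a recursively enumerable set $\Phi$ of full graded multimodal $(\Pi,I)$-types of modal depth $n$ such that for every finite pointed $(\Pi,I)$-model $(M,w)$, $(M,w)\models\varphi$ iff $(M,w)\models\tau$ for some $\tau\in\Phi$.
   Context: $(\Pi,I)$-formulae of graded multimodal logic (GMML) are generated by $\varphi ::= \top \mid p \mid \neg\varphi \mid (\varphi\land\varphi) \mid \langle\alpha\rangle_{\geq k}\varphi$ with $p\in\Pi$, $\alpha\in I$, $k\in\mathbb N$; $\langle\alpha\rangle_{=k}\varphi$ abbreviates $\langle\alpha\rangle_{\geq k}\varphi\land\neg\langle\alpha\rangle_{\geq k+1}\varphi$. The modal depth is the maximum nesting depth of diamonds. A $(\Pi,I)$-model is $M=(W,(R_\alpha)_{\alpha\in I},V)$ with $W$ nonempty finite, $R_\alpha\subseteq W\times W$, $V\colon\Pi\to\wp(W)$; a pointed model is $(M,w)$, $w\in W$; $\mathcal N^\alpha(w)=\{v:(w,v)\in R_\alpha\}$. All models are finite. Semantics: $(M,w)\models p$ iff $w\in V(p)$, Boolean cases standard, $(M,w)\models\langle\alpha\rangle_{\geq k}\psi$ iff $|\{v\in\mathcal N^\alpha(w):(M,v)\models\psi\}|\geq k$. Graded multimodal types: $\tau^{(M,w)}_{\varepsilon}$ is the conjunction (in a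 fixed canonical order and bracketing) of all $p\in\Pi$ with $w\in V(p)$ and all $\neg p$ with $p\in\Pi$, $w\notin V(p)$ (it is $\top$ if $\Pi=\emptyset$). For a width $\mathbf k=(\mathbf k_1,\dots,\mathbf k_n)$ with $\mathbf k_i\in\mathbb N^{|I|}$, let $T_{\mathbf k}$ be the set of all types of width $\mathbf k$ of all finite pointed $(\Pi,I)$-models; for $\mathbf k_0=(k_1,\dots,k_{|I|})\in\mathbb N^{|I|}$ define $\tau^{(M,w)}_{(\mathbf k_0,\mathbf k_1,\dots,\mathbf k_n)}$ as the canonically ordered conjunction of $\tau^{(M,w)}_\varepsilon$; all $\langle\alpha\rangle_{=\ell}\tau$ with $\alpha\in I$, $1\le\ell\le k_\alpha-1$, $\tau\in T_{\mathbf k}$ and $(M,w)\models\langle\alpha\rangle_{=\ell}\tau$; all $\langle\alpha\rangle_{\geq k_\alpha}\tau$ with $\alpha\in I$, $\tau\in T_{\mathbf k}$ and $(M,w)\models\langle\alpha\rangle_{\geq k_\alpha}\tau$; and all $\langle\alpha\rangle_{=|\mathcal N^\alpha(w)|}\top$ with $\alpha\in I$ and $k_\alpha>|\mathcal N^\alpha(w)|$. The full graded multimodal $(\Pi,I)$-type of modal depth $0$ of $(M,w)$ is $\tau^{(M,w)}_0=\tau^{(M,w)}_\varepsilon$; that of modal depth $n+1$ is $\tau^{(M,w)}_{n+1}=\tau^{(M,w)}_{(\mathbf k_1,\dots,\mathbf k_{n+1})}$ for any widths $\mathbf k_i=(k_{i,1},\dots,k_{i,|I|})$ with $k_{i,\alpha}>\max\{|\mathcal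 N^\alpha(v)| : (w,v)\in(\bigcup_{\beta\in I}R_\beta)^{i-1}\}$ for all $i\in[n+1]$, $\alpha\in I$. A full graded multimodal type of modal depth $n$ is any formula of the form $\tau^{(M,w)}_n$. *)

theory Defs
  imports Main "HOL-Library.Nat_Bijection"
begin

text \<open>Proposition symbols and modality indices are natural numbers; a
(Pi,I)-formula is a formula all of whose symbols lie in Pi and indices in I.\<close>

datatype form =
    Top
  | Prop nat
  | Neg form
  | And form form
  | Dia nat nat form   (* Dia alpha k phi  =  <alpha>_{>=k} phi *)

definition Dia_eq :: "nat \<Rightarrow> nat \<Rightarrow> form \<Rightarrow> form" where
  "Dia_eq \<alpha> k \<phi> = And (Dia \<alpha> k \<phi>) (Neg (Dia \<alpha> (Suc k) \<phi>))"

fun wff :: "nat set \<Rightarrow> nat set \<Rightarrow> form \<Rightarrow> bool" where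
  "wff \<Pi> I Top = True"
| "wff \<Pi> I (Prop p) = (p \<in> \<Pi>)"
| "wff \<Pi> I (Neg \<phi>) = wff \<Pi> I \<phi>"
| "wff \<Pi> I (And \<phi> \<psi>) = (wff \<Pi> I \<phi> \<and> wff \<Pi> I \<psi>)"
| "wff \<Pi> I (Dia \<alpha> k \<phi>) = (\<alpha> \<in> I \<and> wff \<Pi> I \<phi>)"

fun md :: "form \<Rightarrow> nat" where
  "md Top = 0"
| "md (Prop p) = 0"
| "md (Neg \<phi>) = md \<phi>"
| "md (And \<phi> \<psi>) = max (md \<phi>) (md \<psi>)"
| "md (Dia \<alpha> k \<phi>) = Suc (md \<phi>)"

record 'w kmodel =
  W   :: "'w set"
  Rel :: "nat \<Rightarrow> ('w \<times> 'w) set"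
  Val :: "nat \<Rightarrow> 'w set"

definition is_model :: "nat set \<Rightarrow> nat set \<Rightarrow> 'w kmodel \<Rightarrow> bool" where
  "is_model \<Pi> I M \<longleftrightarrow> finite (W M) \<and> W M \<noteq> {} \<and>
     (\<forall>\<alpha>\<in>I. Rel M \<alpha> \<subseteq> W M \<times> W M) \<and> (\<forall>p\<in>\<Pi>. Val M p \<subseteq> W M)"

definition nbh :: "'w kmodel \<Rightarrow> nat \<Rightarrow> 'w \<Rightarrow> 'w set" where
  "nbh M \<alpha> w = {v. (w, v) \<in> Rel M \<alpha>}"

fun sat :: "'w kmodel \<Rightarrow> 'w \<Rightarrow> form \<Rightarrow> bool" where
  "sat M w Top = True"
| "sat M w (Prop p) = (w \<in> Val M p)"
| "sat M w (Neg \<phi>) = (\<not> sat M w \<phi>)"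
| "sat M w (And \<phi> \<psi>) = (sat M w \<phi> \<and> sat M w \<psi>)"
| "sat M w (Dia \<alpha> k \<phi>) = (k \<le> card {v \<in> nbh M \<alpha> w. sat M v \<phi>})"

fun code :: "form \<Rightarrow> nat" where
  "code Top = prod_encode (0, 0)"
| "code (Prop p) = prod_encode (1, p)"
| "code (Neg \<phi>) = prod_encode (2, code \<phi>)"
| "code (And \<phi> \<psi>) = prod_encode (3, prod_encode (code \<phi>, code \<psi>))"
| "code (Dia \<alpha> k \<phi>) = prod_encode (4, prod_encode (\<alpha>, prod_encode (k, code \<phi>)))"

fun conj_list :: "form list \<Rightarrow> form" where
  "conj_list [] = Top"
| "conj_list [\<phi>] = \<phi>"
| "conj_list (\<phi> # \<psi> # \<phi>s) = And \<phi> (conj_list (\<psi> # \<phi>s))"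

definition conj_set :: "form set \<Rightarrow> form" where
  "conj_set S = conj_list (map (inv code) (sorted_list_of_set (code ` S)))"

definition type_eps :: "nat set \<Rightarrow> 'w kmodel \<Rightarrow> 'w \<Rightarrow> form" where
  "type_eps \<Pi> M w = conj_set ({Prop p | p. p \<in> \<Pi> \<and> w \<in> Val M p}
                             \<union> {Neg (Prop p) | p. p \<in> \<Pi> \<and> w \<notin> Val M p})"

text \<open>Type of width ks (a list of vectors in N^I, head = outermost width).
The set T of types of the inner width ranges over all finite pointed
(Pi,I)-models; models up to isomorphism are represented with worlds in nat.\<close>
primrec gtype :: "nat set \<Rightarrow> nat set \<Rightarrow> (nat \<Rightarrow> nat) list \<Rightarrow> nat kmodel \<Rightarrow> nat \<Rightarrow> form" where
  "gtype \<Pi> I [] M w = type_eps \<Pi> M w"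
| "gtype \<Pi> I (k # ks) M w =
    (let T = {gtype \<Pi> I ks M' v | M' v. is_model \<Pi> I M' \<and> v \<in> W M'} in
     conj_set ({type_eps \<Pi> M w}
       \<union> {Dia_eq \<alpha> l \<tau> | \<alpha> l \<tau>. \<alpha> \<in> I \<and> 1 \<le> l \<and> l \<le> k \<alpha> - 1 \<and> \<tau> \<in> T \<and> sat M w (Dia_eq \<alpha> l \<tau>)}
       \<union> {Dia \<alpha> (k \<alpha>) \<tau> | \<alpha> \<tau>. \<alpha> \<in> I \<and> \<tau> \<in> T \<and> sat M w (Dia \<alpha> (k \<alpha>) \<tau>)}
       \<union> {Dia_eq \<alpha> (card (nbh M \<alpha> w)) Top | \<alpha>. \<alpha> \<in> I \<and> card (nbh M \<alpha> w) < k \<alpha>}))"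

definition all_rel :: "nat set \<Rightarrow> 'w kmodel \<Rightarrow> ('w \<times> 'w) set" where
  "all_rel I M = (\<Union>\<beta>\<in>I. Rel M \<beta>)"

text \<open>Admissible widths for the full type of depth length ks at (M,w):
k_{i,alpha} > max {|N^alpha(v)| : (w,v) in R^(i-1)} (max of the empty set = 0).\<close>
definition admissible_widths :: "nat set \<Rightarrow> nat kmodel \<Rightarrow> nat \<Rightarrow> (nat \<Rightarrow> nat) list \<Rightarrow> bool" where
  "admissible_widths I M w ks \<longleftrightarrow>
     (\<forall>i < length ks. \<forall>\<alpha>\<in>I. 0 < (ks ! i) \<alpha> \<and>
        (\<forall>v. (w, v) \<in> (all_rel I M) ^^ i \<longrightarrow> card (nbh M \<alpha> v) < (ks ! i) \<alpha>))"

text \<open>A full graded multimodal (Pi,I)-type of modal depth n is any formula of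
the form tau_n^(M,w) for some finite pointed model; we quantify directly over
admissible widths (the paper asserts independence of the choice).\<close>
definition is_full_type :: "nat set \<Rightarrow> nat set \<Rightarrow> nat \<Rightarrow> form \<Rightarrow> bool" where
  "is_full_type \<Pi> I n \<tau> \<longleftrightarrow>
     (\<exists>M w ks. is_model \<Pi> I M \<and> w \<in> W M \<and> length ks = n \<and>
               admissible_widths I M w ks \<and> \<tau> = gtype \<Pi> I ks M w)"

datatype recf = Zf | Sf | Proj nat | Comp recf "recf list" | Prim recf recf | Mn recf

inductive eval :: "recf \<Rightarrow> nat list \<Rightarrow> nat \<Rightarrow> bool" where
  ev_Z: "eval Zf xs 0"
| ev_S: "eval Sf (x # xs) (Suc x)"
| ev_Proj: "i < length xs \<Longrightarrow> eval (Proj i) xs (xs ! i)"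
| ev_Comp: "length ys = length gs \<Longrightarrow> (\<forall>i < length gs. eval (gs ! i) xs (ys ! i))
            \<Longrightarrow> eval f ys z \<Longrightarrow> eval (Comp f gs) xs z"
| ev_Prim0: "eval f xs y \<Longrightarrow> eval (Prim f g) (0 # xs) y"
| ev_PrimS: "eval (Prim f g) (n # xs) y \<Longrightarrow> eval g (y # n # xs) z
             \<Longrightarrow> eval (Prim f g) (Suc n # xs) z"
| ev_Mn: "eval f (n # xs) 0 \<Longrightarrow> (\<forall>m < n. \<exists>y. eval f (m # xs) (Suc y))
          \<Longrightarrow> eval (Mn f) xs n"

definition re_set :: "nat set \<Rightarrow> bool" where
  "re_set A \<longleftrightarrow> (\<exists>f. A = {x. \<exists>y. eval f [x] y})"

definition re_form_set :: "form set \<Rightarrow> bool" where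
  "re_form_set \<Phi> \<longleftrightarrow> re_set (code ` \<Phi>)"

end

theory Submission
  imports Defs
begin

(* A finite pointed model is determined, as far as formulas of modal depth at most n are
   concerned, by its canonical type of depth n: its atomic type together with, for every modality,
   the exact number of successors of each canonical type of depth n - 1 and the exact degree.
   For admissible widths the full type coincides with the canonical type, so a formula of depth n
   is equivalent to the disjunction of the canonical types of all finite pointed models satisfying
   it. Finite pointed models are enumerated by codes of models with worlds 0, ..., N - 1, and the
   code of the canonical type of such a model is computed by a primitive recursive expression;
   hence the set of these types is recursively enumerable. *)

section \<open>Partial recursive functions\<close>

inductive_cases eval_ZfE: "eval Zf xs y"
inductive_cases eval_SfE: "eval Sf xs y"
inductive_cases eval_ProjE: "eval (Proj i) xs y"
inductive_cases eval_CompE: "eval (Comp f gs) xs y"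
inductive_cases eval_PrimE: "eval (Prim f g) xs y"
inductive_cases eval_MnE: "eval (Mn f) xs y"

lemma eval_deterministic: "eval f xs y \<Longrightarrow> eval f xs y' \<Longrightarrow> y = y'"
proof (induction arbitrary: y' rule: eval.induct)
  case (ev_Z xs)
  then show ?case by (rule eval_ZfE) simp
next
  case (ev_S x xs)
  then show ?case by (rule eval_SfE) simp
next
  case (ev_Proj i xs)
  then show ?case by (auto elim: eval_ProjE)
next
  case (ev_Comp ys gs xs f z)
  from ev_Comp.prems obtain ys' where len: "length ys' = length gs"
    and args: "\<forall>i<length gs. eval (gs ! i) xs (ys' ! i)" and "eval f ys' y'"
    by (rule eval_CompE) simp
  moreover have "ys = ys'"
    by (rule nth_equalityI) (use ev_Comp.hyps(1) ev_Comp.IH(1) len args in auto)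
  ultimately show ?case using ev_Comp.IH(2) by blast
next
  case (ev_Prim0 f xs y)
  from ev_Prim0.prems show ?case
    by (rule eval_PrimE) (use ev_Prim0.IH in auto)
next
  case (ev_PrimS f g n xs y z)
  from ev_PrimS.prems show ?case
    by (rule eval_PrimE) (use ev_PrimS.IH in auto)
next
  case (ev_Mn f n xs)
  from ev_Mn.prems obtain n' where "y' = n'" and zero: "eval f (n' # xs) 0"
    and below: "\<forall>m<n'. \<exists>y. eval f (m # xs) (Suc y)"
    by (rule eval_MnE) simp
  moreover have "\<not> n < n'" and "\<not> n' < n"
    using ev_Mn.IH zero below by (fastforce, fastforce)
  ultimately show ?case by simp
qed

lemma eval_ProjI: "i < length xs \<Longrightarrow> y = xs ! i \<Longrightarrow> eval (Proj i) xs y"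
  using ev_Proj by simp

lemma eval_CompI:
  assumes "length ys = length gs" "\<And>i. i < length gs \<Longrightarrow> eval (gs ! i) xs (ys ! i)" "eval f ys z"
  shows "eval (Comp f gs) xs z"
  using assms by (intro ev_Comp) auto

lemma eval_Comp_single: "eval g xs y \<Longrightarrow> eval f [y] z \<Longrightarrow> eval (Comp f [g]) xs z"
  by (rule eval_CompI[where ys="[y]"]) auto

lemma eval_Comp_pair:
  "eval g1 xs y1 \<Longrightarrow> eval g2 xs y2 \<Longrightarrow> eval f [y1, y2] z \<Longrightarrow> eval (Comp f [g1, g2]) xs z"
  by (rule eval_CompI[where ys="[y1, y2]"]) (auto simp: less_Suc_eq nth_Cons')

lemma eval_Comp_drop:
  assumes "eval f (drop d xs) z" "length xs = d + k"
  shows "eval (Comp f (map Proj [d..<d + k])) xs z"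
  by (rule eval_CompI[where ys="drop d xs"]) (use assms in \<open>auto intro!: eval_ProjI\<close>)

lemma eval_Comp_Cons:
  assumes "eval f (y # xs) z" "eval g xs y" "length xs = k"
  shows "eval (Comp f (g # map Proj [0..<k])) xs z"
  by (rule eval_CompI[where ys="y # xs"])
     (use assms in \<open>auto intro!: eval_ProjI simp: nth_Cons' less_Suc_eq_0_disj\<close>)

lemma eval_Prim_rec_nat:
  assumes "eval f xs b" and "\<And>j acc. eval g (acc # j # xs) (G j acc)"
  shows "eval (Prim f g) (n # xs) (rec_nat b G n)"
  by (induction n) (use assms in \<open>auto intro: ev_Prim0 ev_PrimS\<close>)

fun const_recf :: "nat \<Rightarrow> recf" where
  "const_recf 0 = Zf"
| "const_recf (Suc c) = Comp Sf [const_recf c]"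

definition add_recf :: recf where
  "add_recf = Prim (Proj 0) (Comp Sf [Proj 0])"

definition mult_recf :: recf where
  "mult_recf = Prim Zf (Comp add_recf [Proj 0, Proj 2])"

definition pred_recf :: recf where
  "pred_recf = Prim Zf (Proj 1)"

definition monus_recf :: recf where
  "monus_recf = Comp (Prim (Proj 0) (Comp pred_recf [Proj 0])) [Proj 1, Proj 0]"

lemma eval_const_recf: "eval (const_recf c) xs c"
  by (induction c) (auto intro: ev_Z ev_S eval_Comp_single)

lemma eval_add_recf: "eval add_recf [x, y] (x + y)"
proof -
  have "eval add_recf [x, y] (rec_nat y (\<lambda>j acc. Suc acc) x)"
    unfolding add_recf_def
    by (rule eval_Prim_rec_nat) (auto intro!: eval_ProjI eval_Comp_single ev_S)
  moreover have "rec_nat y (\<lambda>j acc. Suc acc) x = x + y" by (induction x) auto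
  ultimately show ?thesis by simp
qed

lemma eval_mult_recf: "eval mult_recf [x, y] (x * y)"
proof -
  have "eval mult_recf [x, y] (rec_nat 0 (\<lambda>j acc. acc + y) x)"
    unfolding mult_recf_def
    by (rule eval_Prim_rec_nat) (auto intro!: ev_Z eval_Comp_pair ev_Proj eval_add_recf)
  moreover have "rec_nat 0 (\<lambda>j acc. acc + y) x = x * y" by (induction x) auto
  ultimately show ?thesis by simp
qed

lemma eval_pred_recf: "eval pred_recf [x] (x - Suc 0)"
proof -
  have "eval pred_recf [x] (rec_nat 0 (\<lambda>j acc. j) x)"
    unfolding pred_recf_def by (rule eval_Prim_rec_nat) (auto intro!: ev_Z eval_ProjI)
  moreover have "rec_nat 0 (\<lambda>j acc. j) x = x - Suc 0" by (cases x) auto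
  ultimately show ?thesis by simp
qed

lemma eval_monus_recf: "eval monus_recf [x, y] (x - y)"
proof -
  have "eval (Prim (Proj 0) (Comp pred_recf [Proj 0])) [y, x] (rec_nat x (\<lambda>j acc. acc - Suc 0) y)"
    by (rule eval_Prim_rec_nat) (auto intro!: eval_ProjI eval_Comp_single eval_pred_recf)
  moreover have "rec_nat x (\<lambda>j acc. acc - Suc 0) y = x - y" by (induction y) auto
  ultimately show ?thesis
    unfolding monus_recf_def by (auto intro!: eval_Comp_pair ev_Proj)
qed

text \<open>Primitive recursive expressions over an environment of natural numbers. \<open>Sum\<close>, \<open>Prod\<close> and
\<open>Rec\<close> bind new variables in front of the environment, so compound operations are written as
closed programs and invoked with \<open>Call\<close>, which avoids shifting the variables of their arguments.\<close>

datatype aexp = V nat | C nat | Plus aexp aexp | Times aexp aexp | Monus aexp aexp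
  | Sum aexp aexp | Prod aexp aexp | Rec aexp aexp aexp | Call aexp "aexp list"

fun aval :: "aexp \<Rightarrow> nat list \<Rightarrow> nat" where
  "aval (V i) xs = xs ! i"
| "aval (C c) xs = c"
| "aval (Plus a b) xs = aval a xs + aval b xs"
| "aval (Times a b) xs = aval a xs * aval b xs"
| "aval (Monus a b) xs = aval a xs - aval b xs"
| "aval (Sum b e) xs = (\<Sum>u<aval b xs. aval e (u # xs))"
| "aval (Prod b e) xs = (\<Prod>u<aval b xs. aval e (u # xs))"
| "aval (Rec n b s) xs = rec_nat (aval b xs) (\<lambda>j acc. aval s (acc # j # xs)) (aval n xs)"
| "aval (Call f es) xs = aval f (map (\<lambda>e. aval e xs) es)"

fun closed :: "nat \<Rightarrow> aexp \<Rightarrow> bool" where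
  "closed k (V i) = (i < k)"
| "closed k (C c) = True"
| "closed k (Plus a b) = (closed k a \<and> closed k b)"
| "closed k (Times a b) = (closed k a \<and> closed k b)"
| "closed k (Monus a b) = (closed k a \<and> closed k b)"
| "closed k (Sum b e) = (closed k b \<and> closed (Suc k) e)"
| "closed k (Prod b e) = (closed k b \<and> closed (Suc k) e)"
| "closed k (Rec n b s) = (closed k n \<and> closed k b \<and> closed (Suc (Suc k)) s)"
| "closed k (Call f es) = (closed (length es) f \<and> (\<forall>e\<in>set es. closed k e))"

fun compile :: "nat \<Rightarrow> aexp \<Rightarrow> recf" where
  "compile k (V i) = Proj i"
| "compile k (C c) = const_recf c"
| "compile k (Plus a b) = Comp add_recf [compile k a, compile k b]"
| "compile k (Times a b) = Comp mult_recf [compile k a, compile k b]"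
| "compile k (Monus a b) = Comp monus_recf [compile k a, compile k b]"
| "compile k (Sum b e) =
     Comp (Prim Zf (Comp add_recf [Proj 0, Comp (compile (Suc k) e) (map Proj [1..<1 + Suc k])]))
       (compile k b # map Proj [0..<k])"
| "compile k (Prod b e) =
     Comp (Prim (const_recf 1) (Comp mult_recf [Proj 0, Comp (compile (Suc k) e) (map Proj [1..<1 + Suc k])]))
       (compile k b # map Proj [0..<k])"
| "compile k (Rec n b s) =
     Comp (Prim (compile k b) (compile (Suc (Suc k)) s)) (compile k n # map Proj [0..<k])"
| "compile k (Call f es) = Comp (compile (length es) f) (map (compile k) es)"

lemma eval_compile_Sum_step:
  assumes "closed (Suc k) e" "length xs = k"
    and "\<And>ys. length ys = Suc k \<Longrightarrow> eval (compile (Suc k) e) ys (aval e ys)"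
    and "\<And>x y. eval f [x, y] (F x y)"
  shows "eval (Comp f [Proj 0, Comp (compile (Suc k) e) (map Proj [1..<1 + Suc k])])
           (acc # j # xs) (F acc (aval e (j # xs)))"
proof -
  have "eval (Comp (compile (Suc k) e) (map Proj [1..<1 + Suc k])) (acc # j # xs) (aval e (j # xs))"
    by (rule eval_Comp_drop) (use assms in auto)
  then show ?thesis by (auto intro!: eval_Comp_pair ev_Proj assms(4))
qed

lemma eval_compile: "closed k e \<Longrightarrow> length xs = k \<Longrightarrow> eval (compile k e) xs (aval e xs)"
proof (induction e arbitrary: k xs)
  case (V i) then show ?case by (auto intro: eval_ProjI)
next
  case (C c) then show ?case by (simp add: eval_const_recf)
next
  case (Plus a b) then show ?case by (auto intro!: eval_Comp_pair eval_add_recf)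
next
  case (Times a b) then show ?case by (auto intro!: eval_Comp_pair eval_mult_recf)
next
  case (Monus a b) then show ?case by (auto intro!: eval_Comp_pair eval_monus_recf)
next
  case (Sum b e)
  let ?step = "Comp add_recf [Proj 0, Comp (compile (Suc k) e) (map Proj [1..<1 + Suc k])]"
  have "eval ?step (acc # j # xs) (acc + aval e (j # xs))" for acc j
    by (rule eval_compile_Sum_step[where F="(+)"]) (use Sum in \<open>auto intro: eval_add_recf\<close>)
  then have "eval (Prim Zf ?step) (n # xs) (rec_nat 0 (\<lambda>j acc. acc + aval e (j # xs)) n)" for n
    by (intro eval_Prim_rec_nat ev_Z)
  moreover have "rec_nat 0 (\<lambda>j acc. acc + f j) n = (\<Sum>u<n. f u)" for f :: "nat \<Rightarrow> nat" and n
    by (induction n) auto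
  ultimately have "eval (Prim Zf ?step) (aval b xs # xs) (aval (Sum b e) xs)" by simp
  then show ?case unfolding compile.simps by (rule eval_Comp_Cons) (use Sum in auto)
next
  case (Prod b e)
  let ?step = "Comp mult_recf [Proj 0, Comp (compile (Suc k) e) (map Proj [1..<1 + Suc k])]"
  have "eval ?step (acc # j # xs) (acc * aval e (j # xs))" for acc j
    by (rule eval_compile_Sum_step[where F="(*)"]) (use Prod in \<open>auto intro: eval_mult_recf\<close>)
  then have "eval (Prim (const_recf 1) ?step) (n # xs) (rec_nat 1 (\<lambda>j acc. acc * aval e (j # xs)) n)" for n
    by (intro eval_Prim_rec_nat eval_const_recf)
  moreover have "rec_nat 1 (\<lambda>j acc. acc * f j) n = (\<Prod>u<n. f u)" for f :: "nat \<Rightarrow> nat" and n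
    by (induction n) auto
  ultimately have "eval (Prim (const_recf 1) ?step) (aval b xs # xs) (aval (Prod b e) xs)" by simp
  then show ?case unfolding compile.simps by (rule eval_Comp_Cons) (use Prod in auto)
next
  case (Rec n b s)
  have "eval (Prim (compile k b) (compile (Suc (Suc k)) s)) (m # xs)
     (rec_nat (aval b xs) (\<lambda>j acc. aval s (acc # j # xs)) m)" for m
    by (rule eval_Prim_rec_nat) (use Rec in auto)
  then show ?case unfolding compile.simps aval.simps by (rule eval_Comp_Cons) (use Rec in auto)
next
  case (Call f es)
  then show ?case
    by (auto intro!: eval_CompI[where ys="map (\<lambda>e. aval e xs) es"])
qed

lemma re_set_aexp_zeros:
  assumes "closed 2 e"
  shows "re_set {x. \<exists>m. aval e [m, x] = 0}"
proof -
  let ?f = "compile 2 e"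
  have ev: "eval ?f [m, x] (aval e [m, x])" for m x
    by (rule eval_compile) (use assms in auto)
  have "(\<exists>m. aval e [m, x] = 0) \<longleftrightarrow> (\<exists>y. eval (Mn ?f) [x] y)" for x
  proof
    assume "\<exists>m. aval e [m, x] = 0"
    then have least: "aval e [LEAST m. aval e [m, x] = 0, x] = 0" by (rule LeastI_ex)
    have "\<forall>m < (LEAST m. aval e [m, x] = 0). \<exists>y. eval ?f [m, x] (Suc y)"
      by (metis ev not_less_Least not0_implies_Suc)
    then show "\<exists>y. eval (Mn ?f) [x] y" using ev least by (metis ev_Mn)
  next
    assume "\<exists>y. eval (Mn ?f) [x] y"
    then obtain y where "eval ?f [y, x] 0" by (auto elim: eval_MnE)
    then show "\<exists>m. aval e [m, x] = 0" using ev eval_deterministic by blast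
  qed
  then show ?thesis unfolding re_set_def by blast
qed

definition sg_exp :: "aexp \<Rightarrow> aexp" where
  "sg_exp e = Monus (C 1) (Monus (C 1) e)"

definition not_exp :: "aexp \<Rightarrow> aexp" where
  "not_exp e = Monus (C 1) e"

definition eq_exp :: "aexp \<Rightarrow> aexp \<Rightarrow> aexp" where
  "eq_exp a b = not_exp (Plus (Monus a b) (Monus b a))"

definition le_exp :: "aexp \<Rightarrow> aexp \<Rightarrow> aexp" where
  "le_exp a b = not_exp (Monus a b)"

definition lt_exp :: "aexp \<Rightarrow> aexp \<Rightarrow> aexp" where
  "lt_exp a b = sg_exp (Monus b a)"

definition ite_exp :: "aexp \<Rightarrow> aexp \<Rightarrow> aexp \<Rightarrow> aexp" where
  "ite_exp c a b = Plus (Times (sg_exp c) a) (Times (not_exp c) b)"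

definition sum_list_exp :: "aexp list \<Rightarrow> aexp" where
  "sum_list_exp es = foldr Plus es (C 0)"

lemma aval_sg_exp [simp]: "aval (sg_exp e) xs = of_bool (aval e xs \<noteq> 0)"
  by (simp add: sg_exp_def)

lemma aval_not_exp [simp]: "aval (not_exp e) xs = of_bool (aval e xs = 0)"
  by (simp add: not_exp_def)

lemma aval_eq_exp [simp]: "aval (eq_exp a b) xs = of_bool (aval a xs = aval b xs)"
  by (simp add: eq_exp_def)

lemma aval_le_exp [simp]: "aval (le_exp a b) xs = of_bool (aval a xs \<le> aval b xs)"
  by (simp add: le_exp_def)

lemma aval_lt_exp [simp]: "aval (lt_exp a b) xs = of_bool (aval a xs < aval b xs)"
  by (simp add: lt_exp_def)

lemma aval_ite_exp [simp]: "aval (ite_exp c a b) xs = (if aval c xs \<noteq> 0 then aval a xs else aval b xs)"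
  by (simp add: ite_exp_def)

lemma aval_sum_list_exp [simp]: "aval (sum_list_exp es) xs = (\<Sum>e\<leftarrow>es. aval e xs)"
  unfolding sum_list_exp_def by (induction es) auto

lemma closed_sg_exp [simp]: "closed k (sg_exp e) = closed k e"
  and closed_not_exp [simp]: "closed k (not_exp e) = closed k e"
  and closed_eq_exp [simp]: "closed k (eq_exp a b) = (closed k a \<and> closed k b)"
  and closed_le_exp [simp]: "closed k (le_exp a b) = (closed k a \<and> closed k b)"
  and closed_lt_exp [simp]: "closed k (lt_exp a b) = (closed k a \<and> closed k b)"
  and closed_ite_exp [simp]: "closed k (ite_exp c a b) = (closed k c \<and> closed k a \<and> closed k b)"
  by (auto simp: sg_exp_def not_exp_def eq_exp_def le_exp_def lt_exp_def ite_exp_def)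

lemma closed_sum_list_exp [simp]: "closed k (sum_list_exp es) = (\<forall>e\<in>set es. closed k e)"
  unfolding sum_list_exp_def by (induction es) auto

definition pair_prog :: aexp where
  "pair_prog = Plus (Sum (Plus (Plus (V 0) (V 1)) (C 1)) (V 0)) (V 0)"

lemma aval_pair_prog [simp]: "aval pair_prog [a, b] = prod_encode (a, b)"
proof -
  have "(\<Sum>u<s. u) + s = triangle s" for s by (induction s) auto
  then show ?thesis unfolding pair_prog_def prod_encode_def by simp
qed

lemma sum_unique_witness:
  assumes "a0 < N" and "\<And>a. a < N \<Longrightarrow> Q a \<longleftrightarrow> a = a0"
  shows "(\<Sum>a<N. a * of_bool (Q a)) = (a0 :: nat)"
proof -
  have "{..<N} \<inter> {a. Q a} = {a0}" using assms by auto
  then show ?thesis by simp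
qed

definition fst_prog :: aexp where
  "fst_prog = Sum (Plus (V 0) (C 1))
     (Times (V 0) (sg_exp (Sum (Plus (V 1) (C 1)) (eq_exp (Call pair_prog [V 1, V 0]) (V 2)))))"

definition snd_prog :: aexp where
  "snd_prog = Sum (Plus (V 0) (C 1))
     (Times (V 0) (sg_exp (Sum (Plus (V 1) (C 1)) (eq_exp (Call pair_prog [V 0, V 1]) (V 2)))))"

lemma aval_fst_prog [simp]: "aval fst_prog [m] = fst (prod_decode m)"
proof -
  obtain a0 b0 where m: "m = prod_encode (a0, b0)" by (metis prod_decode_inverse surj_pair)
  then have "a0 \<le> m" "b0 \<le> m" using le_prod_encode_1 le_prod_encode_2 by auto
  have "aval fst_prog [m] = (\<Sum>a<Suc m. a * of_bool (\<exists>b\<in>{..<Suc m}. prod_encode (a, b) = m))"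
    unfolding fst_prog_def by (simp del: sum_of_bool_eq sum_mult_of_bool_eq sum.lessThan_Suc)
  also have "\<dots> = a0"
    using m \<open>a0 \<le> m\<close> \<open>b0 \<le> m\<close> by (intro sum_unique_witness) auto
  finally show ?thesis using m by simp
qed

lemma aval_snd_prog [simp]: "aval snd_prog [m] = snd (prod_decode m)"
proof -
  obtain a0 b0 where m: "m = prod_encode (a0, b0)" by (metis prod_decode_inverse surj_pair)
  then have "a0 \<le> m" "b0 \<le> m" using le_prod_encode_1 le_prod_encode_2 by auto
  have "aval snd_prog [m] = (\<Sum>b<Suc m. b * of_bool (\<exists>a\<in>{..<Suc m}. prod_encode (a, b) = m))"
    unfolding snd_prog_def by (simp del: sum_of_bool_eq sum_mult_of_bool_eq sum.lessThan_Suc)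
  also have "\<dots> = b0"
    using m \<open>a0 \<le> m\<close> \<open>b0 \<le> m\<close> by (intro sum_unique_witness) auto
  finally show ?thesis using m by simp
qed

definition div_prog :: aexp where
  "div_prog = Sum (V 0) (le_exp (Times (Plus (V 0) (C 1)) (V 2)) (V 1))"

lemma aval_div_prog [simp]:
  assumes "0 < d"
  shows "aval div_prog [n, d] = n div d"
proof -
  have "(q + 1) * d \<le> n \<longleftrightarrow> q < n div d" for q
    using less_eq_div_iff_mult_less_eq[OF assms, of "q + 1" n] by linarith
  then have "aval div_prog [n, d] = card ({..<n} \<inter> {q. q < n div d})"
    unfolding div_prog_def by (simp add: algebra_simps)
  also have "{..<n} \<inter> {q. q < n div d} = {..<n div d}"
    using div_le_dividend[of n d] by (auto intro: less_le_trans)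
  finally show ?thesis by simp
qed

definition bit_prog :: aexp where
  "bit_prog = Monus (Call div_prog [V 1, Prod (V 0) (C 2)])
     (Times (C 2) (Call div_prog [Call div_prog [V 1, Prod (V 0) (C 2)], C 2]))"

lemma aval_bit_prog [simp]: "aval bit_prog [x, r] = of_bool (x \<in> set_decode r)"
proof -
  have "aval bit_prog [x, r] = r div 2 ^ x - 2 * (r div 2 ^ x div 2)"
    unfolding bit_prog_def by simp
  also have "\<dots> = r div 2 ^ x mod 2" by (simp add: minus_mult_div_eq_mod)
  finally show ?thesis by (simp add: set_decode_def odd_iff_mod_2_eq_one)
qed

definition pair_exp :: "aexp \<Rightarrow> aexp \<Rightarrow> aexp" where "pair_exp a b = Call pair_prog [a, b]"
definition fst_exp :: "aexp \<Rightarrow> aexp" where "fst_exp a = Call fst_prog [a]"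
definition snd_exp :: "aexp \<Rightarrow> aexp" where "snd_exp a = Call snd_prog [a]"
definition mem_exp :: "aexp \<Rightarrow> aexp \<Rightarrow> aexp" where "mem_exp a r = Call bit_prog [a, r]"

lemma aval_pair_exp [simp]: "aval (pair_exp a b) xs = prod_encode (aval a xs, aval b xs)"
  and aval_fst_exp [simp]: "aval (fst_exp a) xs = fst (prod_decode (aval a xs))"
  and aval_snd_exp [simp]: "aval (snd_exp a) xs = snd (prod_decode (aval a xs))"
  and aval_mem_exp [simp]: "aval (mem_exp a r) xs = of_bool (aval a xs \<in> set_decode (aval r xs))"
  by (simp_all add: pair_exp_def fst_exp_def snd_exp_def mem_exp_def)

lemma closed_pair_exp [simp]: "closed k (pair_exp a b) = (closed k a \<and> closed k b)"
  and closed_fst_exp [simp]: "closed k (fst_exp a) = closed k a"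
  and closed_snd_exp [simp]: "closed k (snd_exp a) = closed k a"
  and closed_mem_exp [simp]: "closed k (mem_exp a r) = (closed k a \<and> closed k r)"
  by (simp_all add: pair_exp_def fst_exp_def snd_exp_def mem_exp_def pair_prog_def fst_prog_def
      snd_prog_def bit_prog_def div_prog_def)

section \<open>Formulas and their codes\<close>

lemma code_injective: "code x = code y \<Longrightarrow> x = y"
proof (induction x arbitrary: y)
  case Top
  then show ?case by (cases y) auto
next
  case (Prop p)
  then show ?case by (cases y) auto
next
  case (Neg x)
  then show ?case by (cases y) auto
next
  case (And x1 x2)
  then show ?case by (cases y) auto
next
  case (Dia \<alpha> k x)
  then show ?case by (cases y) auto
qed

lemma inj_code: "inj code"
  by (rule injI) (rule code_injective)

lemma code_eq_iff [simp]: "code x = code y \<longleftrightarrow> x = y"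
  using inj_code by (auto dest: injD)

lemma inv_code [simp]: "inv code (code x) = x"
  using inj_code by simp

lemma set_conj_set_list: "finite S \<Longrightarrow> set (map (inv code) (sorted_list_of_set (code ` S))) = S"
  by (simp add: image_image)

lemma sat_conj_list: "sat M w (conj_list xs) \<longleftrightarrow> (\<forall>\<psi>\<in>set xs. sat M w \<psi>)"
  by (induction xs rule: conj_list.induct) auto

lemma wff_conj_list: "\<forall>\<psi>\<in>set xs. wff P I \<psi> \<Longrightarrow> wff P I (conj_list xs)"
  by (induction xs rule: conj_list.induct) auto

lemma sat_conj_set: "finite S \<Longrightarrow> sat M w (conj_set S) \<longleftrightarrow> (\<forall>\<psi>\<in>S. sat M w \<psi>)"
  unfolding conj_set_def by (simp add: sat_conj_list set_conj_set_list del: set_map)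

lemma wff_conj_set: "finite S \<Longrightarrow> \<forall>\<psi>\<in>S. wff P I \<psi> \<Longrightarrow> wff P I (conj_set S)"
  unfolding conj_set_def by (rule wff_conj_list) (simp add: set_conj_set_list del: set_map)

lemma sat_Dia_eq: "sat M w (Dia_eq \<alpha> k \<phi>) \<longleftrightarrow> card {v \<in> nbh M \<alpha> w. sat M v \<phi>} = k"
  by (auto simp: Dia_eq_def)

lemma wff_Dia_eq [simp]: "wff P I (Dia_eq \<alpha> k \<phi>) \<longleftrightarrow> \<alpha> \<in> I \<and> wff P I \<phi>"
  by (auto simp: Dia_eq_def)

definition literals :: "nat set \<Rightarrow> 'w kmodel \<Rightarrow> 'w \<Rightarrow> form set" where
  "literals P M w = {Prop p | p. p \<in> P \<and> w \<in> Val M p} \<union> {Neg (Prop p) | p. p \<in> P \<and> w \<notin> Val M p}"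

lemma type_eps_conj_literals: "type_eps P M w = conj_set (literals P M w)"
  by (simp add: type_eps_def literals_def)

lemma finite_literals: "finite P \<Longrightarrow> finite (literals P M w)"
  unfolding literals_def by auto

lemma sat_type_eps_iff:
  assumes "finite P"
  shows "sat M' w' (type_eps P M w) \<longleftrightarrow> (\<forall>p\<in>P. w' \<in> Val M' p \<longleftrightarrow> w \<in> Val M p)"
proof -
  have "sat M' w' (type_eps P M w) \<longleftrightarrow> (\<forall>\<psi>\<in>literals P M w. sat M' w' \<psi>)"
    by (simp add: type_eps_conj_literals sat_conj_set finite_literals assms)
  also have "\<dots> \<longleftrightarrow> (\<forall>p\<in>P. w' \<in> Val M' p \<longleftrightarrow> w \<in> Val M p)"
  proof (rule iffI; intro ballI)
    fix p assume all: "\<forall>\<psi>\<in>literals P M w. sat M' w' \<psi>" and p: "p \<in> P"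
    show "w' \<in> Val M' p \<longleftrightarrow> w \<in> Val M p"
    proof (cases "w \<in> Val M p")
      case True
      then have "Prop p \<in> literals P M w" using p by (auto simp: literals_def)
      then show ?thesis using all True by fastforce
    next
      case False
      then have "Neg (Prop p) \<in> literals P M w" using p by (auto simp: literals_def)
      then show ?thesis using all False by fastforce
    qed
  qed (auto simp: literals_def)
  finally show ?thesis .
qed

lemma sat_type_eps_self: "finite P \<Longrightarrow> sat M w (type_eps P M w)"
  by (simp add: sat_type_eps_iff)

lemma type_eps_eq_of_sat:
  assumes "finite P" and "sat M' w' (type_eps P M w)"
  shows "type_eps P M' w' = type_eps P M w"
proof -
  have "\<forall>p\<in>P. w' \<in> Val M' p \<longleftrightarrow> w \<in> Val M p"
    using assms by (simp add: sat_type_eps_iff)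
  then have "literals P M' w' = literals P M w"
    unfolding literals_def by blast
  then show ?thesis by (simp add: type_eps_conj_literals)
qed

lemma wff_type_eps: "finite P \<Longrightarrow> wff P I (type_eps P M w)"
  unfolding type_eps_conj_literals by (rule wff_conj_set) (auto simp: finite_literals literals_def)

section \<open>Canonical types\<close>

text \<open>The canonical type coincides with the full type for admissible widths (\<open>gtype_eq_ctype\<close>),
but it is defined without reference to the set of all types of a given width, so it can be
computed from a coded model.\<close>

definition succ_count :: "('w \<Rightarrow> form) \<Rightarrow> 'w kmodel \<Rightarrow> nat \<Rightarrow> 'w \<Rightarrow> form \<Rightarrow> nat" where
  "succ_count \<sigma> M \<alpha> w s = card {u \<in> nbh M \<alpha> w. \<sigma> u = s}"

definition ctype_conjuncts :: "nat set \<Rightarrow> nat set \<Rightarrow> ('w \<Rightarrow> form) \<Rightarrow> 'w kmodel \<Rightarrow> 'w \<Rightarrow> form set" where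
  "ctype_conjuncts P I \<sigma> M w = {type_eps P M w}
     \<union> (\<lambda>(\<alpha>, v). Dia_eq \<alpha> (succ_count \<sigma> M \<alpha> w (\<sigma> v)) (\<sigma> v)) ` (SIGMA \<alpha>:I. nbh M \<alpha> w)
     \<union> (\<lambda>\<alpha>. Dia_eq \<alpha> (card (nbh M \<alpha> w)) Top) ` I"

fun ctype :: "nat set \<Rightarrow> nat set \<Rightarrow> nat \<Rightarrow> 'w kmodel \<Rightarrow> 'w \<Rightarrow> form" where
  "ctype P I 0 M w = type_eps P M w"
| "ctype P I (Suc n) M w = conj_set (ctype_conjuncts P I (ctype P I n M) M w)"

definition finite_nbhs :: "nat set \<Rightarrow> 'w kmodel \<Rightarrow> bool" where
  "finite_nbhs I M \<longleftrightarrow> (\<forall>\<alpha>\<in>I. \<forall>w. finite (nbh M \<alpha> w))"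

lemma finite_ctype_conjuncts:
  "finite I \<Longrightarrow> finite_nbhs I M \<Longrightarrow> finite (ctype_conjuncts P I \<sigma> M w)"
  by (auto simp: ctype_conjuncts_def finite_nbhs_def intro!: finite_SigmaI)

lemma sat_ctype_Suc:
  "finite I \<Longrightarrow> finite_nbhs I M \<Longrightarrow>
    sat M' w' (ctype P I (Suc n) M w) \<longleftrightarrow> (\<forall>\<psi>\<in>ctype_conjuncts P I (ctype P I n M) M w. sat M' w' \<psi>)"
  by (simp only: ctype.simps(2)) (simp add: sat_conj_set finite_ctype_conjuncts)

lemma wff_ctype: "finite P \<Longrightarrow> finite I \<Longrightarrow> finite_nbhs I M \<Longrightarrow> wff P I (ctype P I n M w)"
proof (induction n arbitrary: w)
  case 0
  then show ?case by (simp add: wff_type_eps)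
next
  case (Suc n)
  show ?case
    unfolding ctype.simps
    by (rule wff_conj_set[OF finite_ctype_conjuncts[OF Suc.prems(2,3)]])
       (use Suc in \<open>auto simp: ctype_conjuncts_def wff_type_eps\<close>)
qed

lemma sat_type_eps_of_sat_ctype:
  "finite I \<Longrightarrow> finite_nbhs I M \<Longrightarrow> sat M' w' (ctype P I n M w) \<Longrightarrow> sat M' w' (type_eps P M w)"
  by (cases n) (simp, auto simp only: sat_ctype_Suc ctype_conjuncts_def Un_iff insert_iff)

lemma fibre_cards_eq:
  assumes A: "finite A" and B: "finite B" and card: "card B = card A"
    and eq: "\<And>a. a \<in> A \<Longrightarrow> card {b \<in> B. h b = g a} = card {a' \<in> A. g a' = g a}"
  shows "card {b \<in> B. h b = s} = card {a \<in> A. g a = s}"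
proof -
  have "card (\<Union>s\<in>g ` A. {b \<in> B. h b = s}) = (\<Sum>s\<in>g ` A. card {b \<in> B. h b = s})"
    by (rule card_UN_disjoint) (use A B in auto)
  also have "\<dots> = (\<Sum>s\<in>g ` A. card {a \<in> A. g a = s})"
    by (rule sum.cong) (use eq in auto)
  also have "\<dots> = card (\<Union>s\<in>g ` A. {a \<in> A. g a = s})"
    by (rule card_UN_disjoint[symmetric]) (use A in auto)
  also have "(\<Union>s\<in>g ` A. {a \<in> A. g a = s}) = A" by auto
  finally have "(\<Union>s\<in>g ` A. {b \<in> B. h b = s}) = B"
    using card by (intro card_subset_eq[OF B]) auto
  then have sub: "h ` B \<subseteq> g ` A" by auto
  show ?thesis
  proof (cases "s \<in> g ` A")
    case True
    then show ?thesis using eq by auto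
  next
    case False
    then have "{a \<in> A. g a = s} = {}" "{b \<in> B. h b = s} = {}" using sub by auto
    then show ?thesis by (simp only: card.empty)
  qed
qed

lemma image_eq_of_fibre_cards:
  assumes "finite A" "finite B" "\<And>s. card {b \<in> B. h b = s} = card {a \<in> A. g a = s}"
  shows "h ` B = g ` A"
proof -
  have gA: "s \<in> g ` A \<longleftrightarrow> card {a \<in> A. g a = s} \<noteq> 0" for s
    using assms(1) by (auto simp: card_eq_0_iff)
  have hB: "s \<in> h ` B \<longleftrightarrow> card {b \<in> B. h b = s} \<noteq> 0" for s
    using assms(2) by (auto simp: card_eq_0_iff)
  show ?thesis
    by (rule set_eqI) (simp only: gA hB assms(3))
qed

lemma card_eq_sum_fibres:
  assumes "finite A"
  shows "card {a \<in> A. Q a} = (\<Sum>s\<in>g ` A. card {a \<in> A. g a = s \<and> Q a})"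
proof -
  have "card (\<Union>s\<in>g ` A. {a \<in> A. g a = s \<and> Q a}) = (\<Sum>s\<in>g ` A. card {a \<in> A. g a = s \<and> Q a})"
    by (rule card_UN_disjoint) (use assms in auto)
  moreover have "(\<Union>s\<in>g ` A. {a \<in> A. g a = s \<and> Q a}) = {a \<in> A. Q a}" by auto
  ultimately show ?thesis by simp
qed

lemma card_filter_eq_by_fibres:
  assumes A: "finite A" and B: "finite B"
    and fibres: "\<And>s. card {b \<in> B. h b = s} = card {a \<in> A. g a = s}"
    and agree: "\<And>a b. a \<in> A \<Longrightarrow> b \<in> B \<Longrightarrow> g a = h b \<Longrightarrow> Q' b \<longleftrightarrow> Q a"
  shows "card {b \<in> B. Q' b} = card {a \<in> A. Q a}"
proof -
  have img: "h ` B = g ` A" by (rule image_eq_of_fibre_cards[OF A B fibres])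
  have fibre: "card {b \<in> B. h b = s \<and> Q' b} = card {a \<in> A. g a = s \<and> Q a}" if "s \<in> g ` A" for s
  proof -
    obtain a0 b0 where a0: "a0 \<in> A" "g a0 = s" and b0: "b0 \<in> B" "h b0 = s"
      using \<open>s \<in> g ` A\<close> img by (metis imageE)
    show ?thesis
    proof (cases "Q a0")
      case True
      then have "{b \<in> B. h b = s \<and> Q' b} = {b \<in> B. h b = s}" "{a \<in> A. g a = s \<and> Q a} = {a \<in> A. g a = s}"
        using agree[OF a0(1)] agree[OF _ b0(1)] a0 b0 by auto
      then show ?thesis using fibres by (simp only:)
    next
      case False
      then have "{b \<in> B. h b = s \<and> Q' b} = {}" "{a \<in> A. g a = s \<and> Q a} = {}"
        using agree[OF a0(1)] agree[OF _ b0(1)] a0 b0 by auto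
      then show ?thesis by (simp only: card.empty)
    qed
  qed
  have "(\<Sum>s\<in>g ` A. card {b \<in> B. h b = s \<and> Q' b}) = (\<Sum>s\<in>g ` A. card {a \<in> A. g a = s \<and> Q a})"
    by (rule sum.cong[OF refl]) (rule fibre)
  then show ?thesis
    unfolding card_eq_sum_fibres[OF A, of Q g] card_eq_sum_fibres[OF B, of Q' h] img .
qed

lemma sat_ctype_Suc_self:
  assumes P: "finite P" and I: "finite I" and fM: "finite_nbhs I M"
    and sat_iff: "\<And>u v. sat M u (ctype P I n M v) \<longleftrightarrow> ctype P I n M u = ctype P I n M v"
  shows "sat M w (ctype P I (Suc n) M w)"
  unfolding sat_ctype_Suc[OF I fM]
  by (auto simp: ctype_conjuncts_def sat_type_eps_self[OF P] sat_Dia_eq sat_iff succ_count_def)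

lemma ctype_Suc_fibres:
  assumes I: "finite I" and fM: "finite_nbhs I M" and fM': "finite_nbhs I M'"
    and sat_iff: "\<And>u v. sat M' u (ctype P I n M v) \<longleftrightarrow> ctype P I n M' u = ctype P I n M v"
    and sat: "sat M' w' (ctype P I (Suc n) M w)" and \<alpha>: "\<alpha> \<in> I"
  shows "card (nbh M' \<alpha> w') = card (nbh M \<alpha> w)"
    and "succ_count (ctype P I n M') M' \<alpha> w' t = succ_count (ctype P I n M) M \<alpha> w t"
proof -
  define \<sigma> \<sigma>' where "\<sigma> = ctype P I n M" and "\<sigma>' = ctype P I n M'"
  have all: "\<forall>\<psi>\<in>ctype_conjuncts P I \<sigma> M w. sat M' w' \<psi>"
    using sat unfolding \<sigma>_def sat_ctype_Suc[OF I fM] .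
  have fin: "finite (nbh M \<alpha> w)" "finite (nbh M' \<alpha> w')"
    using fM fM' \<alpha> by (auto simp: finite_nbhs_def)
  have "Dia_eq \<alpha> (card (nbh M \<alpha> w)) Top \<in> ctype_conjuncts P I \<sigma> M w"
    using \<alpha> by (simp add: ctype_conjuncts_def)
  then have "sat M' w' (Dia_eq \<alpha> (card (nbh M \<alpha> w)) Top)" using all by blast
  then show card: "card (nbh M' \<alpha> w') = card (nbh M \<alpha> w)" by (simp add: sat_Dia_eq)
  have eq: "card {b \<in> nbh M' \<alpha> w'. \<sigma>' b = \<sigma> a} = card {a' \<in> nbh M \<alpha> w. \<sigma> a' = \<sigma> a}"
    if a: "a \<in> nbh M \<alpha> w" for a
  proof -
    have "Dia_eq \<alpha> (succ_count \<sigma> M \<alpha> w (\<sigma> a)) (\<sigma> a) \<in> ctype_conjuncts P I \<sigma> M w"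
      unfolding ctype_conjuncts_def
      by (rule UnI1, rule UnI2, rule image_eqI[where x="(\<alpha>, a)"]) (use \<alpha> a in auto)
    then have "sat M' w' (Dia_eq \<alpha> (succ_count \<sigma> M \<alpha> w (\<sigma> a)) (\<sigma> a))" using all by blast
    then have "card {u \<in> nbh M' \<alpha> w'. sat M' u (\<sigma> a)} = succ_count \<sigma> M \<alpha> w (\<sigma> a)"
      by (simp only: sat_Dia_eq)
    then show ?thesis unfolding succ_count_def \<sigma>_def \<sigma>'_def sat_iff .
  qed
  show "succ_count \<sigma>' M' \<alpha> w' t = succ_count \<sigma> M \<alpha> w t"
    unfolding succ_count_def by (rule fibre_cards_eq[OF fin card eq])
qed

lemma image_split_Sigma: "(\<lambda>(\<alpha>, v). F \<alpha> (\<sigma> v)) ` (SIGMA \<alpha>:I. S \<alpha>) = (\<Union>\<alpha>\<in>I. F \<alpha> ` \<sigma> ` S \<alpha>)"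
  by auto

lemma ctype_conjuncts_eqI:
  assumes eps: "type_eps P M' w' = type_eps P M w"
    and fin: "\<And>\<alpha>. \<alpha> \<in> I \<Longrightarrow> finite (nbh M \<alpha> w)" "\<And>\<alpha>. \<alpha> \<in> I \<Longrightarrow> finite (nbh M' \<alpha> w')"
    and card: "\<And>\<alpha>. \<alpha> \<in> I \<Longrightarrow> card (nbh M' \<alpha> w') = card (nbh M \<alpha> w)"
    and count: "\<And>\<alpha> t. \<alpha> \<in> I \<Longrightarrow> succ_count \<sigma>' M' \<alpha> w' t = succ_count \<sigma> M \<alpha> w t"
  shows "ctype_conjuncts P I \<sigma>' M' w' = ctype_conjuncts P I \<sigma> M w"
proof -
  have img: "\<sigma>' ` nbh M' \<alpha> w' = \<sigma> ` nbh M \<alpha> w" if "\<alpha> \<in> I" for \<alpha>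
    using image_eq_of_fibre_cards[OF fin[OF that] count[OF that, unfolded succ_count_def]] .
  have "(\<Union>\<alpha>\<in>I. (\<lambda>s. Dia_eq \<alpha> (succ_count \<sigma>' M' \<alpha> w' s) s) ` \<sigma>' ` nbh M' \<alpha> w')
      = (\<Union>\<alpha>\<in>I. (\<lambda>s. Dia_eq \<alpha> (succ_count \<sigma> M \<alpha> w s) s) ` \<sigma> ` nbh M \<alpha> w)"
    using count img by (intro SUP_cong) simp_all
  moreover have "(\<lambda>\<alpha>. Dia_eq \<alpha> (card (nbh M' \<alpha> w')) Top) ` I = (\<lambda>\<alpha>. Dia_eq \<alpha> (card (nbh M \<alpha> w)) Top) ` I"
    using card by (intro image_cong) simp_all
  ultimately show ?thesis
    unfolding ctype_conjuncts_def eps image_split_Sigma[where F="\<lambda>\<alpha> s. Dia_eq \<alpha> (succ_count _ _ \<alpha> _ s) s"]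
    by (simp only:)
qed

lemma sat_ctype_iff:
  fixes M M' :: "'w kmodel"
  assumes P: "finite P" and I: "finite I" and "finite_nbhs I M" "finite_nbhs I M'"
  shows "sat M' w' (ctype P I n M w) \<longleftrightarrow> ctype P I n M' w' = ctype P I n M w"
  using assms(3,4)
proof (induction n arbitrary: M M' w w')
  case 0
  then show ?case using P sat_type_eps_self type_eps_eq_of_sat by (metis ctype.simps(1))
next
  case (Suc n)
  show ?case
  proof
    assume sat: "sat M' w' (ctype P I (Suc n) M w)"
    have "type_eps P M' w' = type_eps P M w"
      using sat_type_eps_of_sat_ctype[OF I Suc.prems(1) sat] by (rule type_eps_eq_of_sat[OF P])
    moreover note ctype_Suc_fibres[OF I Suc.prems Suc.IH[OF Suc.prems] sat]
    ultimately show "ctype P I (Suc n) M' w' = ctype P I (Suc n) M w"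
      unfolding ctype.simps using Suc.prems
      by (intro arg_cong[where f=conj_set] ctype_conjuncts_eqI) (auto simp: finite_nbhs_def)
  next
    assume "ctype P I (Suc n) M' w' = ctype P I (Suc n) M w"
    then show "sat M' w' (ctype P I (Suc n) M w)"
      using sat_ctype_Suc_self[OF P I Suc.prems(2) Suc.IH[OF Suc.prems(2,2)]] by metis
  qed
qed

lemma sat_ctype_self: "finite P \<Longrightarrow> finite I \<Longrightarrow> finite_nbhs I M \<Longrightarrow> sat M w (ctype P I n M w)"
  by (simp add: sat_ctype_iff)

lemma sat_eq_of_ctype_eq:
  fixes M M' :: "'w kmodel"
  assumes P: "finite P" and I: "finite I"
  shows "wff P I \<psi> \<Longrightarrow> md \<psi> \<le> n \<Longrightarrow> finite_nbhs I M \<Longrightarrow> finite_nbhs I M' \<Longrightarrow>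
    ctype P I n M w = ctype P I n M' w' \<Longrightarrow> sat M w \<psi> \<longleftrightarrow> sat M' w' \<psi>"
proof (induction \<psi> arbitrary: n w w')
  case Top
  then show ?case by simp
next
  case (Prop p)
  then have "sat M' w' (type_eps P M w)"
    using sat_ctype_iff[OF P I] sat_type_eps_of_sat_ctype[OF I] by metis
  then show ?case using Prop.prems(1) by (simp add: sat_type_eps_iff[OF P])
next
  case (Dia \<alpha> k \<psi>)
  obtain m where n: "n = Suc m" and md: "md \<psi> \<le> m" using Dia.prems(2) by (cases n) auto
  have \<alpha>: "\<alpha> \<in> I" and "wff P I \<psi>" using Dia.prems(1) by auto
  have sat: "sat M' w' (ctype P I (Suc m) M w)"
    using Dia.prems(3-5) n sat_ctype_iff[OF P I] by metis
  have "card {b \<in> nbh M' \<alpha> w'. sat M' b \<psi>} = card {a \<in> nbh M \<alpha> w. sat M a \<psi>}"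
  proof (rule card_filter_eq_by_fibres)
    show "finite (nbh M \<alpha> w)" "finite (nbh M' \<alpha> w')"
      using Dia.prems(3,4) \<alpha> by (auto simp: finite_nbhs_def)
    show "card {b \<in> nbh M' \<alpha> w'. ctype P I m M' b = s} = card {a \<in> nbh M \<alpha> w. ctype P I m M a = s}" for s
      using ctype_Suc_fibres(2)[OF I Dia.prems(3,4) sat_ctype_iff[OF P I Dia.prems(3,4)] sat \<alpha>]
      unfolding succ_count_def .
    show "sat M' b \<psi> \<longleftrightarrow> sat M a \<psi>" if "ctype P I m M a = ctype P I m M' b" for a b
      using Dia.IH[OF \<open>wff P I \<psi>\<close> md Dia.prems(3,4) that] by simp
  qed
  then show ?case by simp
next
  case (Neg \<psi>)
  have "sat M w \<psi> \<longleftrightarrow> sat M' w' \<psi>" by (rule Neg.IH) (use Neg.prems in simp_all)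
  then show ?case by simp
next
  case (And \<psi>1 \<psi>2)
  have "sat M w \<psi>1 \<longleftrightarrow> sat M' w' \<psi>1" by (rule And.IH(1)) (use And.prems in simp_all)
  moreover have "sat M w \<psi>2 \<longleftrightarrow> sat M' w' \<psi>2" by (rule And.IH(2)) (use And.prems in simp_all)
  ultimately show ?case by simp
qed

section \<open>Finite models and coded models\<close>

lemma nbh_subset_worlds: "is_model P I M \<Longrightarrow> \<alpha> \<in> I \<Longrightarrow> nbh M \<alpha> w \<subseteq> W M"
  unfolding is_model_def nbh_def by blast

lemma finite_nbhs_of_model: "is_model P I M \<Longrightarrow> finite_nbhs I M"
  unfolding finite_nbhs_def using nbh_subset_worlds by (metis finite_subset is_model_def)

lemma sat_iso:
  fixes M1 :: "'a kmodel" and M2 :: "'b kmodel"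
  assumes inj: "inj_on f (W M1)"
    and nbh: "\<And>\<alpha> x. \<alpha> \<in> I \<Longrightarrow> x \<in> W M1 \<Longrightarrow> nbh M2 \<alpha> (f x) = f ` nbh M1 \<alpha> x"
    and nbh_W: "\<And>\<alpha> x. \<alpha> \<in> I \<Longrightarrow> nbh M1 \<alpha> x \<subseteq> W M1"
    and val: "\<And>p x. p \<in> P \<Longrightarrow> x \<in> W M1 \<Longrightarrow> f x \<in> Val M2 p \<longleftrightarrow> x \<in> Val M1 p"
  shows "wff P I \<psi> \<Longrightarrow> x \<in> W M1 \<Longrightarrow> sat M2 (f x) \<psi> \<longleftrightarrow> sat M1 x \<psi>"
proof (induction \<psi> arbitrary: x)
  case (Dia \<alpha> k \<psi>)
  have \<alpha>: "\<alpha> \<in> I" and "wff P I \<psi>" using Dia.prems by auto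
  then have "{v \<in> nbh M2 \<alpha> (f x). sat M2 v \<psi>} = f ` {v \<in> nbh M1 \<alpha> x. sat M1 v \<psi>}"
    using Dia.IH nbh_W[OF \<alpha>] unfolding nbh[OF \<alpha> Dia.prems(2)] by auto
  moreover have "inj_on f {v \<in> nbh M1 \<alpha> x. sat M1 v \<psi>}"
    using inj nbh_W[OF \<alpha>] by (auto intro: inj_on_subset)
  ultimately show ?case by (simp add: card_image)
qed (use val in auto)

text \<open>Every finite model is isomorphic to a coded one (\<open>coded_model_iso\<close>), so finite pointed
models are enumerated by quadruples of natural numbers.\<close>

definition coded_model :: "nat \<Rightarrow> nat \<Rightarrow> nat \<Rightarrow> nat kmodel" where
  "coded_model N r v = \<lparr>W = {0..<N},
     Rel = (\<lambda>\<alpha>. {(i, j). i < N \<and> j < N \<and> prod_encode (\<alpha>, prod_encode (i, j)) \<in> set_decode r}),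
     Val = (\<lambda>p. {i. i < N \<and> prod_encode (p, i) \<in> set_decode v})\<rparr>"

lemma W_coded_model [simp]: "W (coded_model N r v) = {0..<N}"
  by (simp add: coded_model_def)

lemma nbh_coded_model:
  "nbh (coded_model N r v) \<alpha> i = {j. i < N \<and> j < N \<and> prod_encode (\<alpha>, prod_encode (i, j)) \<in> set_decode r}"
  by (simp add: coded_model_def nbh_def)

lemma Val_coded_model: "Val (coded_model N r v) p = {i. i < N \<and> prod_encode (p, i) \<in> set_decode v}"
  by (simp add: coded_model_def)

lemma is_model_coded_model: "0 < N \<Longrightarrow> is_model P I (coded_model N r v)"
  unfolding is_model_def by (auto simp: coded_model_def)

definition rel_code :: "nat set \<Rightarrow> 'w kmodel \<Rightarrow> ('w \<Rightarrow> nat) \<Rightarrow> nat" where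
  "rel_code I M f = set_encode ((\<lambda>(\<alpha>, x, y). prod_encode (\<alpha>, prod_encode (f x, f y))) ` (SIGMA \<alpha>:I. Rel M \<alpha>))"

definition val_code :: "nat set \<Rightarrow> 'w kmodel \<Rightarrow> ('w \<Rightarrow> nat) \<Rightarrow> nat" where
  "val_code P M f = set_encode ((\<lambda>(p, x). prod_encode (p, f x)) ` (SIGMA p:P. Val M p \<inter> W M))"

lemma nbh_coded_model_rel_code:
  assumes I: "finite I" and M: "is_model P I M" and f: "bij_betw f (W M) {0..<N}"
    and \<alpha>: "\<alpha> \<in> I" and x: "x \<in> W M"
  shows "nbh (coded_model N (rel_code I M f) v) \<alpha> (f x) = f ` nbh M \<alpha> x"
proof -
  have finW: "finite (W M)" and relW: "\<And>\<alpha>. \<alpha> \<in> I \<Longrightarrow> Rel M \<alpha> \<subseteq> W M \<times> W M"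
    using M unfolding is_model_def by auto
  have "finite (Rel M \<alpha>)" if "\<alpha> \<in> I" for \<alpha>
    using finite_subset[OF relW[OF that] finite_cartesian_product[OF finW finW]] .
  then have "finite (SIGMA \<alpha>:I. Rel M \<alpha>)" using I by (intro finite_SigmaI)
  then have decode: "set_decode (rel_code I M f)
      = (\<lambda>(\<alpha>, x, y). prod_encode (\<alpha>, prod_encode (f x, f y))) ` (SIGMA \<alpha>:I. Rel M \<alpha>)"
    unfolding rel_code_def by simp
  have inj: "inj_on f (W M)" and fW: "\<And>z. z \<in> W M \<Longrightarrow> f z < N"
    using f unfolding bij_betw_def by auto
  show ?thesis
  proof (intro set_eqI iffI)
    fix j assume "j \<in> nbh (coded_model N (rel_code I M f) v) \<alpha> (f x)"
    then obtain x' y' where "(x', y') \<in> Rel M \<alpha>" "f x' = f x" "j = f y'"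
      unfolding nbh_coded_model decode by auto
    moreover have "x' \<in> W M" using \<open>(x', y') \<in> Rel M \<alpha>\<close> relW[OF \<alpha>] by auto
    ultimately show "j \<in> f ` nbh M \<alpha> x" using inj x unfolding nbh_def by (auto dest: inj_onD)
  next
    fix j assume "j \<in> f ` nbh M \<alpha> x"
    then obtain y where "(x, y) \<in> Rel M \<alpha>" "j = f y" unfolding nbh_def by auto
    moreover have "f x < N" "f y < N"
      using \<open>(x, y) \<in> Rel M \<alpha>\<close> relW[OF \<alpha>] x by (auto intro: fW)
    ultimately show "j \<in> nbh (coded_model N (rel_code I M f) v) \<alpha> (f x)"
      unfolding nbh_coded_model decode using \<alpha> by force
  qed
qed

lemma Val_coded_model_val_code:
  assumes P: "finite P" and M: "is_model P I M" and f: "bij_betw f (W M) {0..<N}"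
    and p: "p \<in> P" and x: "x \<in> W M"
  shows "f x \<in> Val (coded_model N r (val_code P M f)) p \<longleftrightarrow> x \<in> Val M p"
proof -
  have "finite (W M)" using M unfolding is_model_def by auto
  then have decode:
      "set_decode (val_code P M f) = (\<lambda>(p, x). prod_encode (p, f x)) ` (SIGMA p:P. Val M p \<inter> W M)"
    unfolding val_code_def using P by simp
  have inj: "inj_on f (W M)" and fW: "\<And>z. z \<in> W M \<Longrightarrow> f z < N"
    using f unfolding bij_betw_def by auto
  show ?thesis
  proof
    assume "f x \<in> Val (coded_model N r (val_code P M f)) p"
    then obtain x' where "f x' = f x" "x' \<in> Val M p" "x' \<in> W M"
      unfolding Val_coded_model decode by auto
    then show "x \<in> Val M p" using inj x by (auto dest: inj_onD)
  next
    assume "x \<in> Val M p"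
    then show "f x \<in> Val (coded_model N r (val_code P M f)) p"
      unfolding Val_coded_model decode using p x fW by force
  qed
qed

lemma coded_model_iso:
  fixes M :: "'w kmodel"
  assumes P: "finite P" and I: "finite I" and M: "is_model P I M"
  obtains f N r v where "f ` W M = {0..<N}"
    and "\<And>\<psi> x. wff P I \<psi> \<Longrightarrow> x \<in> W M \<Longrightarrow> sat (coded_model N r v) (f x) \<psi> \<longleftrightarrow> sat M x \<psi>"
proof -
  obtain f where f: "bij_betw f (W M) {0..<card (W M)}"
    using M ex_bij_betw_finite_nat unfolding is_model_def by blast
  let ?D = "coded_model (card (W M)) (rel_code I M f) (val_code P M f)"
  have "sat ?D (f x) \<psi> \<longleftrightarrow> sat M x \<psi>" if "wff P I \<psi>" "x \<in> W M" for \<psi> x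
  proof (rule sat_iso[OF bij_betw_imp_inj_on[OF f] _ _ _ that])
    show "nbh ?D \<alpha> (f x) = f ` nbh M \<alpha> x" if "\<alpha> \<in> I" "x \<in> W M" for \<alpha> x
      by (rule nbh_coded_model_rel_code[OF I M f that])
    show "nbh M \<alpha> x \<subseteq> W M" if "\<alpha> \<in> I" for \<alpha> x
      by (rule nbh_subset_worlds[OF M that])
    show "f x \<in> Val ?D p \<longleftrightarrow> x \<in> Val M p" if "p \<in> P" "x \<in> W M" for p x
      by (rule Val_coded_model_val_code[OF P M f that])
  qed
  with f show thesis by (intro that) (auto simp: bij_betw_def)
qed

section \<open>Full types are canonical types\<close>

lemma admissible_widths_Cons_card:
  "admissible_widths I M w (k # ks) \<Longrightarrow> \<alpha> \<in> I \<Longrightarrow> card (nbh M \<alpha> w) < k \<alpha>"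
  unfolding admissible_widths_def by force

lemma admissible_widths_Cons_succ:
  assumes adm: "admissible_widths I M w (k # ks)" and "\<alpha> \<in> I" and "v \<in> nbh M \<alpha> w"
  shows "admissible_widths I M v ks"
  unfolding admissible_widths_def
proof (intro allI impI ballI conjI)
  fix i \<beta> assume i: "i < length ks" and \<beta>: "\<beta> \<in> I"
  show "0 < (ks ! i) \<beta>" using adm i \<beta> unfolding admissible_widths_def by fastforce
  fix z assume "(v, z) \<in> all_rel I M ^^ i"
  moreover have "(w, v) \<in> all_rel I M" using assms(2,3) unfolding all_rel_def nbh_def by blast
  ultimately have "(w, z) \<in> all_rel I M ^^ Suc i" by (rule relpow_Suc_I2[rotated])
  then show "card (nbh M \<beta> z) < (ks ! i) \<beta>" using adm i \<beta> unfolding admissible_widths_def by fastforce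
qed

lemma admissible_widths_replicate:
  assumes "is_model P I M"
  shows "admissible_widths I M w (replicate n (\<lambda>\<alpha>. Suc (card (W M))))"
proof -
  have "card (nbh M \<alpha> v) \<le> card (W M)" if "\<alpha> \<in> I" for \<alpha> v
    using assms nbh_subset_worlds[OF assms that] by (intro card_mono) (auto simp: is_model_def)
  then show ?thesis unfolding admissible_widths_def by (simp add: less_Suc_eq_le)
qed

definition types_of_width :: "nat set \<Rightarrow> nat set \<Rightarrow> (nat \<Rightarrow> nat) list \<Rightarrow> form set" where
  "types_of_width P I ks = {gtype P I ks M v | M v. is_model P I M \<and> v \<in> W M}"

definition gtype_conjuncts ::
  "nat set \<Rightarrow> nat set \<Rightarrow> (nat \<Rightarrow> nat) \<Rightarrow> form set \<Rightarrow> nat kmodel \<Rightarrow> nat \<Rightarrow> form set" where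
  "gtype_conjuncts P I k T M w = {type_eps P M w}
     \<union> {Dia_eq \<alpha> l \<tau> | \<alpha> l \<tau>. \<alpha> \<in> I \<and> 1 \<le> l \<and> l \<le> k \<alpha> - 1 \<and> \<tau> \<in> T \<and> sat M w (Dia_eq \<alpha> l \<tau>)}
     \<union> {Dia \<alpha> (k \<alpha>) \<tau> | \<alpha> \<tau>. \<alpha> \<in> I \<and> \<tau> \<in> T \<and> sat M w (Dia \<alpha> (k \<alpha>) \<tau>)}
     \<union> {Dia_eq \<alpha> (card (nbh M \<alpha> w)) Top | \<alpha>. \<alpha> \<in> I \<and> card (nbh M \<alpha> w) < k \<alpha>}"

lemma gtype_Cons: "gtype P I (k # ks) M w = conj_set (gtype_conjuncts P I k (types_of_width P I ks) M w)"
  by (simp add: gtype_conjuncts_def types_of_width_def)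

declare gtype.simps(2) [simp del]

lemma Dia_eq_mem_gtype_conjuncts:
  "\<alpha> \<in> I \<Longrightarrow> 1 \<le> l \<Longrightarrow> l \<le> k \<alpha> - 1 \<Longrightarrow> \<tau> \<in> T \<Longrightarrow> sat M w (Dia_eq \<alpha> l \<tau>) \<Longrightarrow>
    Dia_eq \<alpha> l \<tau> \<in> gtype_conjuncts P I k T M w"
  unfolding gtype_conjuncts_def by blast

lemma Dia_mem_gtype_conjuncts:
  "\<alpha> \<in> I \<Longrightarrow> \<tau> \<in> T \<Longrightarrow> sat M w (Dia \<alpha> (k \<alpha>) \<tau>) \<Longrightarrow> Dia \<alpha> (k \<alpha>) \<tau> \<in> gtype_conjuncts P I k T M w"
  unfolding gtype_conjuncts_def by blast

lemma degree_mem_gtype_conjuncts: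
  "\<alpha> \<in> I \<Longrightarrow> card (nbh M \<alpha> w) < k \<alpha> \<Longrightarrow> Dia_eq \<alpha> (card (nbh M \<alpha> w)) Top \<in> gtype_conjuncts P I k T M w"
  unfolding gtype_conjuncts_def by blast

definition width_conjuncts :: "nat set \<Rightarrow> nat set \<Rightarrow> (nat \<Rightarrow> nat) \<Rightarrow> form set \<Rightarrow> form set" where
  "width_conjuncts P I k T = conj_set ` Pow (Prop ` P \<union> (\<lambda>p. Neg (Prop p)) ` P)
     \<union> (\<lambda>(\<alpha>, l, \<tau>). Dia_eq \<alpha> l \<tau>) ` (SIGMA \<alpha>:I. {..k \<alpha>} \<times> T)
     \<union> (\<lambda>(\<alpha>, \<tau>). Dia \<alpha> (k \<alpha>) \<tau>) ` (I \<times> T)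
     \<union> (\<lambda>(\<alpha>, l). Dia_eq \<alpha> l Top) ` (SIGMA \<alpha>:I. {..k \<alpha>})"

lemma finite_width_conjuncts: "finite P \<Longrightarrow> finite I \<Longrightarrow> finite T \<Longrightarrow> finite (width_conjuncts P I k T)"
  unfolding width_conjuncts_def by (auto intro!: finite_SigmaI)

lemma type_eps_mem_width_conjuncts: "type_eps P M w \<in> conj_set ` Pow (Prop ` P \<union> (\<lambda>p. Neg (Prop p)) ` P)"
  unfolding type_eps_conj_literals literals_def by blast

lemma gtype_conjuncts_subset: "gtype_conjuncts P I k T M w \<subseteq> width_conjuncts P I k T"
proof
  fix \<psi> assume "\<psi> \<in> gtype_conjuncts P I k T M w"
  then consider "\<psi> = type_eps P M w"
    | \<alpha> l \<tau> where "\<psi> = Dia_eq \<alpha> l \<tau>" "\<alpha> \<in> I" "l \<le> k \<alpha> - 1" "\<tau> \<in> T"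
    | \<alpha> \<tau> where "\<psi> = Dia \<alpha> (k \<alpha>) \<tau>" "\<alpha> \<in> I" "\<tau> \<in> T"
    | \<alpha> where "\<psi> = Dia_eq \<alpha> (card (nbh M \<alpha> w)) Top" "\<alpha> \<in> I" "card (nbh M \<alpha> w) < k \<alpha>"
    unfolding gtype_conjuncts_def by blast
  then show "\<psi> \<in> width_conjuncts P I k T"
  proof cases
    case 1
    show ?thesis unfolding width_conjuncts_def 1
      by (rule UnI1, rule UnI1, rule UnI1) (rule type_eps_mem_width_conjuncts)
  next
    case (2 \<alpha> l \<tau>)
    show ?thesis unfolding width_conjuncts_def
      by (rule UnI1, rule UnI1, rule UnI2, rule image_eqI[where x="(\<alpha>, l, \<tau>)"]) (use 2 in auto)
  next
    case (3 \<alpha> \<tau>)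
    show ?thesis unfolding width_conjuncts_def
      by (rule UnI1, rule UnI2, rule image_eqI[where x="(\<alpha>, \<tau>)"]) (use 3 in auto)
  next
    case (4 \<alpha>)
    show ?thesis unfolding width_conjuncts_def
      by (rule UnI2, rule image_eqI[where x="(\<alpha>, card (nbh M \<alpha> w))"]) (use 4 in auto)
  qed
qed

lemma finite_types_of_width: "finite P \<Longrightarrow> finite I \<Longrightarrow> finite (types_of_width P I ks)"
proof (induction ks)
  case Nil
  have "types_of_width P I [] \<subseteq> conj_set ` Pow (Prop ` P \<union> (\<lambda>p. Neg (Prop p)) ` P)"
    unfolding types_of_width_def using type_eps_mem_width_conjuncts by auto
  then show ?case using Nil by (auto intro: finite_subset)
next
  case (Cons k ks)
  have "types_of_width P I (k # ks) \<subseteq> conj_set ` Pow (width_conjuncts P I k (types_of_width P I ks))"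
    unfolding types_of_width_def gtype_Cons using gtype_conjuncts_subset by blast
  then show ?case using Cons finite_width_conjuncts by (auto intro: finite_subset)
qed

lemma finite_gtype_conjuncts:
  "finite P \<Longrightarrow> finite I \<Longrightarrow> finite (gtype_conjuncts P I k (types_of_width P I ks) M w)"
  by (rule finite_subset[OF gtype_conjuncts_subset finite_width_conjuncts])
     (simp_all add: finite_types_of_width)

lemma sat_gtype_Cons:
  "finite P \<Longrightarrow> finite I \<Longrightarrow>
    sat M' w' (gtype P I (k # ks) M w) \<longleftrightarrow> (\<forall>\<psi>\<in>gtype_conjuncts P I k (types_of_width P I ks) M w. sat M' w' \<psi>)"
  unfolding gtype_Cons by (rule sat_conj_set[OF finite_gtype_conjuncts])

lemma sat_gtype_self:
  assumes P: "finite P" and I: "finite I"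
  shows "sat M w (gtype P I ks M w)"
proof (cases ks)
  case Nil
  then show ?thesis using P by (simp add: sat_type_eps_self)
next
  case (Cons k ks')
  have "sat M w \<psi>" if "\<psi> \<in> gtype_conjuncts P I k (types_of_width P I ks') M w" for \<psi>
    using that unfolding gtype_conjuncts_def by (auto simp: sat_type_eps_self[OF P] sat_Dia_eq)
  then show ?thesis unfolding Cons sat_gtype_Cons[OF P I] by blast
qed

lemma card_nbh_filter_le:
  assumes "is_model P I M" and "\<alpha> \<in> I"
  shows "card {x \<in> nbh M \<alpha> u. Q x} \<le> card (nbh M \<alpha> u)"
proof (rule card_mono)
  show "finite (nbh M \<alpha> u)"
    using finite_nbhs_of_model[OF assms(1)] assms(2) unfolding finite_nbhs_def by blast
qed auto

lemma card_le_sum_card_sat_types: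
  fixes M :: "nat kmodel"
  assumes P: "finite P" and I: "finite I" and M: "is_model P I M" and \<alpha>: "\<alpha> \<in> I"
  shows "card (nbh M \<alpha> w) \<le> (\<Sum>\<tau>\<in>types_of_width P I ks. card {x \<in> nbh M \<alpha> w. sat M x \<tau>})"
proof -
  let ?T = "types_of_width P I ks"
  have fin: "finite (nbh M \<alpha> w)" "finite ?T"
    using finite_nbhs_of_model[OF M] \<alpha> finite_types_of_width[OF P I] by (auto simp: finite_nbhs_def)
  have one_le: "1 \<le> card {\<tau> \<in> ?T. sat M x \<tau>}" if "x \<in> nbh M \<alpha> w" for x
  proof -
    have "gtype P I ks M x \<in> {\<tau> \<in> ?T. sat M x \<tau>}"
      using that nbh_subset_worlds[OF M \<alpha>] sat_gtype_self[OF P I] M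
      unfolding types_of_width_def by blast
    then show ?thesis using fin(2) by (auto simp: Suc_le_eq card_gt_0_iff)
  qed
  have "(\<Sum>x\<in>nbh M \<alpha> w. 1) \<le> (\<Sum>x\<in>nbh M \<alpha> w. card {\<tau> \<in> ?T. sat M x \<tau>})"
    by (rule sum_mono) (rule one_le)
  then have "card (nbh M \<alpha> w) \<le> (\<Sum>x\<in>nbh M \<alpha> w. card {\<tau> \<in> ?T. sat M x \<tau>})"
    by simp
  also have "\<dots> = (\<Sum>\<tau>\<in>?T. card {x \<in> nbh M \<alpha> w. sat M x \<tau>})"
    by (rule sum_multicount_gen) (use fin in auto)
  finally show ?thesis .
qed

lemma sum_ge_if_agree_on_support:
  fixes c c' :: "'a \<Rightarrow> nat"
  assumes T: "finite T" and agree: "\<forall>\<tau>\<in>T. 0 < c' \<tau> \<longrightarrow> c \<tau> = c' \<tau>"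
  shows "sum c' T \<le> sum c T" and "sum c T \<le> sum c' T \<Longrightarrow> \<tau> \<in> T \<Longrightarrow> c \<tau> = c' \<tau>"
proof -
  define S where "S = {\<tau> \<in> T. 0 < c' \<tau>}"
  have ST: "S \<subseteq> T" and S: "finite S" using T unfolding S_def by auto
  have "sum c' T = sum c' S" unfolding S_def using T by (intro sum.mono_neutral_right) auto
  also have "\<dots> = sum c S" using agree unfolding S_def by (intro sum.cong) auto
  finally have c'S: "sum c' T = sum c S" .
  have split: "sum c T = sum c (T - S) + sum c S" by (rule sum.subset_diff[OF ST T])
  then show "sum c' T \<le> sum c T" using c'S by simp
  assume "sum c T \<le> sum c' T" and "\<tau> \<in> T"
  then have "sum c (T - S) = 0" using c'S split by simp
  then show "c \<tau> = c' \<tau>"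
    using T \<open>\<tau> \<in> T\<close> agree unfolding S_def by (cases "0 < c' \<tau>") auto
qed

text \<open>The induction step of \<open>gtype_eq_ctype_and_unique\<close>. Uniqueness at width \<open>ks\<close> identifies the
conjuncts of the type of width \<open>k # ks\<close> with those of the canonical type. It only holds at
admissible points, since a type whose width does not exceed the degree does not determine the
successor counts.\<close>

context
  fixes P I :: "nat set" and ks :: "(nat \<Rightarrow> nat) list"
  assumes P: "finite P" and I: "finite I"
    and gtype_eq_ctype_IH: "\<forall>M x. is_model P I M \<and> x \<in> W M \<and> admissible_widths I M x ks \<longrightarrow>
      gtype P I ks M x = ctype P I (length ks) M x"
    and gtype_unique_IH: "\<forall>M x \<tau>. is_model P I M \<and> x \<in> W M \<and> admissible_widths I M x ks \<and>
      \<tau> \<in> types_of_width P I ks \<and> sat M x \<tau> \<longrightarrow> \<tau> = gtype P I ks M x"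
begin

lemma sat_type_of_width_succ_iff:
  assumes M: "is_model P I M" and adm: "admissible_widths I M u (k # ks)"
    and \<alpha>: "\<alpha> \<in> I" and x: "x \<in> nbh M \<alpha> u" and \<tau>: "\<tau> \<in> types_of_width P I ks"
  shows "sat M x \<tau> \<longleftrightarrow> \<tau> = ctype P I (length ks) M x"
proof -
  have "x \<in> W M" using nbh_subset_worlds[OF M \<alpha>] x by blast
  moreover have "admissible_widths I M x ks" by (rule admissible_widths_Cons_succ[OF adm \<alpha> x])
  ultimately show ?thesis
    using gtype_eq_ctype_IH gtype_unique_IH \<tau> M sat_gtype_self[OF P I] by metis
qed

lemma ctype_succ_mem_types_of_width:
  assumes M: "is_model P I M" and adm: "admissible_widths I M u (k # ks)"
    and \<alpha>: "\<alpha> \<in> I" and x: "x \<in> nbh M \<alpha> u"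
  shows "ctype P I (length ks) M x \<in> types_of_width P I ks"
proof -
  have "x \<in> W M" using nbh_subset_worlds[OF M \<alpha>] x by blast
  moreover have "admissible_widths I M x ks" by (rule admissible_widths_Cons_succ[OF adm \<alpha> x])
  ultimately show ?thesis
    using gtype_eq_ctype_IH M unfolding types_of_width_def by (metis (mono_tags, lifting) mem_Collect_eq)
qed

lemma card_sat_type_of_width_succ:
  assumes "is_model P I M" "admissible_widths I M u (k # ks)" "\<alpha> \<in> I" "\<tau> \<in> types_of_width P I ks"
  shows "card {x \<in> nbh M \<alpha> u. sat M x \<tau>} = succ_count (ctype P I (length ks) M) M \<alpha> u \<tau>"
  unfolding succ_count_def using sat_type_of_width_succ_iff[OF assms(1-3) _ assms(4)]
  by (metis (no_types, lifting))

lemma Dia_eq_conjuncts_eq_succ_conjuncts: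
  assumes M: "is_model P I M" and adm: "admissible_widths I M u (k # ks)"
  defines "\<sigma> \<equiv> ctype P I (length ks) M"
  shows "{Dia_eq \<alpha> l \<tau> | \<alpha> l \<tau>. \<alpha> \<in> I \<and> 1 \<le> l \<and> l \<le> k \<alpha> - 1 \<and> \<tau> \<in> types_of_width P I ks \<and>
        sat M u (Dia_eq \<alpha> l \<tau>)}
    = {Dia_eq \<alpha> (succ_count \<sigma> M \<alpha> u \<tau>) \<tau> | \<alpha> \<tau>. \<alpha> \<in> I \<and> \<tau> \<in> \<sigma> ` nbh M \<alpha> u}"
    (is "?L = ?R")
proof -
  define T where "T = types_of_width P I ks"
  have count: "card {x \<in> nbh M \<alpha> u. sat M x \<tau>} = succ_count \<sigma> M \<alpha> u \<tau>" if "\<alpha> \<in> I" "\<tau> \<in> T" for \<alpha> \<tau>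
    using card_sat_type_of_width_succ[OF M adm that[unfolded T_def]] unfolding \<sigma>_def .
  have pos: "1 \<le> succ_count \<sigma> M \<alpha> u \<tau> \<longleftrightarrow> \<tau> \<in> \<sigma> ` nbh M \<alpha> u" if "\<alpha> \<in> I" for \<alpha> \<tau>
    using finite_nbhs_of_model[OF M] that
    by (auto simp: succ_count_def finite_nbhs_def Suc_le_eq card_gt_0_iff)
  show ?thesis
  proof (intro set_eqI iffI)
    fix \<psi> assume "\<psi> \<in> ?L"
    then obtain \<alpha> l \<tau> where \<psi>: "\<psi> = Dia_eq \<alpha> l \<tau>" and \<alpha>: "\<alpha> \<in> I" and "1 \<le> l" "\<tau> \<in> T"
      and "card {x \<in> nbh M \<alpha> u. sat M x \<tau>} = l"
      unfolding sat_Dia_eq T_def by blast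
    then have "l = succ_count \<sigma> M \<alpha> u \<tau>" and "\<tau> \<in> \<sigma> ` nbh M \<alpha> u"
      using count pos by auto
    then show "\<psi> \<in> ?R" using \<psi> \<alpha> by blast
  next
    fix \<psi> assume "\<psi> \<in> ?R"
    then obtain \<alpha> \<tau> where \<psi>: "\<psi> = Dia_eq \<alpha> (succ_count \<sigma> M \<alpha> u \<tau>) \<tau>" and \<alpha>: "\<alpha> \<in> I"
      and "\<tau> \<in> \<sigma> ` nbh M \<alpha> u" by blast
    then have "\<tau> \<in> T" and "1 \<le> succ_count \<sigma> M \<alpha> u \<tau>"
      using ctype_succ_mem_types_of_width[OF M adm \<alpha>] pos[OF \<alpha>] unfolding T_def \<sigma>_def by auto
    moreover have "succ_count \<sigma> M \<alpha> u \<tau> \<le> k \<alpha> - 1"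
      using admissible_widths_Cons_card[OF adm \<alpha>] card_nbh_filter_le[OF M \<alpha>, of u "\<lambda>x. \<sigma> x = \<tau>"]
      unfolding succ_count_def by simp
    moreover have "sat M u (Dia_eq \<alpha> (succ_count \<sigma> M \<alpha> u \<tau>) \<tau>)"
      using count[OF \<alpha> \<open>\<tau> \<in> T\<close>] by (simp add: sat_Dia_eq)
    ultimately show "\<psi> \<in> ?L" using \<psi> \<alpha> unfolding T_def by blast
  qed
qed

lemma gtype_Cons_eq_ctype:
  assumes M: "is_model P I M" and adm: "admissible_widths I M u (k # ks)"
  shows "gtype P I (k # ks) M u = ctype P I (Suc (length ks)) M u"
proof -
  define T \<sigma> where "T = types_of_width P I ks" and "\<sigma> = ctype P I (length ks) M"
  have deg: "card (nbh M \<alpha> u) < k \<alpha>" if "\<alpha> \<in> I" for \<alpha>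
    by (rule admissible_widths_Cons_card[OF adm that])
  have no_Dia: "\<not> sat M u (Dia \<alpha> (k \<alpha>) \<tau>)" if "\<alpha> \<in> I" for \<alpha> \<tau>
    using deg[OF that] card_nbh_filter_le[OF M that, of u "\<lambda>x. sat M x \<tau>"] by simp
  have succs: "{Dia_eq \<alpha> l \<tau> | \<alpha> l \<tau>. \<alpha> \<in> I \<and> 1 \<le> l \<and> l \<le> k \<alpha> - 1 \<and> \<tau> \<in> T \<and> sat M u (Dia_eq \<alpha> l \<tau>)}
      = (\<lambda>(\<alpha>, v). Dia_eq \<alpha> (succ_count \<sigma> M \<alpha> u (\<sigma> v)) (\<sigma> v)) ` (SIGMA \<alpha>:I. nbh M \<alpha> u)"
    unfolding T_def Dia_eq_conjuncts_eq_succ_conjuncts[OF M adm, folded \<sigma>_def]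
      image_split_Sigma[where F="\<lambda>\<alpha> s. Dia_eq \<alpha> (succ_count \<sigma> M \<alpha> u s) s"] by blast
  have no_Dias: "{Dia \<alpha> (k \<alpha>) \<tau> | \<alpha> \<tau>. \<alpha> \<in> I \<and> \<tau> \<in> T \<and> sat M u (Dia \<alpha> (k \<alpha>) \<tau>)} = {}"
    using no_Dia by blast
  have degrees: "{Dia_eq \<alpha> (card (nbh M \<alpha> u)) Top | \<alpha>. \<alpha> \<in> I \<and> card (nbh M \<alpha> u) < k \<alpha>}
      = (\<lambda>\<alpha>. Dia_eq \<alpha> (card (nbh M \<alpha> u)) Top) ` I"
    using deg by blast
  have "gtype_conjuncts P I k T M u = ctype_conjuncts P I \<sigma> M u"
    unfolding gtype_conjuncts_def ctype_conjuncts_def succs no_Dias degrees by simp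
  then show ?thesis unfolding gtype_Cons ctype.simps T_def \<sigma>_def by simp
qed

lemma sum_card_sat_types_of_width_succ:
  assumes M: "is_model P I M" and adm: "admissible_widths I M u (k # ks)" and \<alpha>: "\<alpha> \<in> I"
  shows "(\<Sum>\<tau>\<in>types_of_width P I ks. card {x \<in> nbh M \<alpha> u. sat M x \<tau>}) = card (nbh M \<alpha> u)"
proof -
  let ?T = "types_of_width P I ks"
  have fin: "finite (nbh M \<alpha> u)" "finite ?T"
    using finite_nbhs_of_model[OF M] \<alpha> finite_types_of_width[OF P I] by (auto simp: finite_nbhs_def)
  have "{\<tau> \<in> ?T. sat M x \<tau>} = {ctype P I (length ks) M x}" if "x \<in> nbh M \<alpha> u" for x
    using sat_type_of_width_succ_iff[OF M adm \<alpha> that] ctype_succ_mem_types_of_width[OF M adm \<alpha> that]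
    by blast
  then have "(\<Sum>x\<in>nbh M \<alpha> u. card {\<tau> \<in> ?T. sat M x \<tau>}) = card (nbh M \<alpha> u)" by simp
  moreover have "(\<Sum>x\<in>nbh M \<alpha> u. card {\<tau> \<in> ?T. sat M x \<tau>}) = (\<Sum>\<tau>\<in>?T. card {x \<in> nbh M \<alpha> u. sat M x \<tau>})"
    by (rule sum_multicount_gen) (use fin in auto)
  ultimately show ?thesis by simp
qed

lemma gtype_Cons_succ_counts_eq:
  assumes M: "is_model P I M" and adm: "admissible_widths I M u (k # ks)"
    and M': "is_model P I M'" and sat: "sat M u (gtype P I (k # ks) M' v')" and \<alpha>: "\<alpha> \<in> I"
  shows "card (nbh M' \<alpha> v') = card (nbh M \<alpha> u)"
    and "\<tau> \<in> types_of_width P I ks \<Longrightarrow>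
      card {y \<in> nbh M' \<alpha> v'. sat M' y \<tau>} = card {x \<in> nbh M \<alpha> u. sat M x \<tau>}"
proof -
  define T where "T = types_of_width P I ks"
  define c c' where "c \<tau> = card {x \<in> nbh M \<alpha> u. sat M x \<tau>}"
    and "c' \<tau> = card {y \<in> nbh M' \<alpha> v'. sat M' y \<tau>}" for \<tau>
  have conj: "sat M u \<psi>" if "\<psi> \<in> gtype_conjuncts P I k T M' v'" for \<psi>
    using sat that unfolding sat_gtype_Cons[OF P I] T_def by blast
  have T: "finite T" unfolding T_def by (rule finite_types_of_width[OF P I])
  have deg: "card (nbh M \<alpha> u) < k \<alpha>" by (rule admissible_widths_Cons_card[OF adm \<alpha>])
  have sum_c: "sum c T = card (nbh M \<alpha> u)"
    unfolding c_def T_def by (rule sum_card_sat_types_of_width_succ[OF M adm \<alpha>])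
  have sum_c': "card (nbh M' \<alpha> v') \<le> sum c' T"
    unfolding c'_def T_def by (rule card_le_sum_card_sat_types[OF P I M' \<alpha>])
  have c_le: "c \<tau> \<le> card (nbh M \<alpha> u)" for \<tau>
    unfolding c_def by (rule card_nbh_filter_le[OF M \<alpha>])
  have "c \<tau> = c' \<tau>" if "\<tau> \<in> T" "0 < c' \<tau>" for \<tau>
  proof (cases "k \<alpha> \<le> c' \<tau>")
    case True
    then have "sat M u (Dia \<alpha> (k \<alpha>) \<tau>)"
      using that \<alpha> by (intro conj Dia_mem_gtype_conjuncts) (auto simp: c'_def)
    then show ?thesis using c_le[of \<tau>] deg unfolding c_def by simp
  next
    case False
    then have "sat M u (Dia_eq \<alpha> (c' \<tau>) \<tau>)"
      using that \<alpha> by (intro conj Dia_eq_mem_gtype_conjuncts) (auto simp: c'_def sat_Dia_eq)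
    then show ?thesis unfolding c_def by (simp add: sat_Dia_eq)
  qed
  then have agree: "\<forall>\<tau>\<in>T. 0 < c' \<tau> \<longrightarrow> c \<tau> = c' \<tau>" by blast
  have "card (nbh M' \<alpha> v') < k \<alpha>"
    using sum_c' sum_ge_if_agree_on_support(1)[OF T agree] sum_c deg by linarith
  then have "sat M u (Dia_eq \<alpha> (card (nbh M' \<alpha> v')) Top)"
    using \<alpha> by (intro conj degree_mem_gtype_conjuncts)
  then show card: "card (nbh M' \<alpha> v') = card (nbh M \<alpha> u)" by (simp add: sat_Dia_eq)
  show "c' \<tau> = c \<tau>" if "\<tau> \<in> T" for \<tau>
    using sum_ge_if_agree_on_support(2)[OF T agree _ that] sum_c sum_c' card by simp
qed

lemma gtype_Cons_unique:
  assumes M: "is_model P I M" and u: "u \<in> W M" and adm: "admissible_widths I M u (k # ks)"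
    and \<tau>: "\<tau> \<in> types_of_width P I (k # ks)" and sat: "sat M u \<tau>"
  shows "\<tau> = gtype P I (k # ks) M u"
proof -
  define T where "T = types_of_width P I ks"
  obtain M' v' where M': "is_model P I M'" and \<tau>_def: "\<tau> = gtype P I (k # ks) M' v'"
    using \<tau> unfolding types_of_width_def by blast
  have "sat M u (type_eps P M' v')"
    using sat unfolding \<tau>_def sat_gtype_Cons[OF P I] gtype_conjuncts_def by blast
  then have eps: "type_eps P M' v' = type_eps P M u" using type_eps_eq_of_sat[OF P] by metis
  note counts = gtype_Cons_succ_counts_eq[OF M adm M' sat[unfolded \<tau>_def]]
  have "sat M' v' (Dia_eq \<alpha> l \<tau>) \<longleftrightarrow> sat M u (Dia_eq \<alpha> l \<tau>)"
    and "sat M' v' (Dia \<alpha> l \<tau>) \<longleftrightarrow> sat M u (Dia \<alpha> l \<tau>)" if "\<alpha> \<in> I" "\<tau> \<in> T" for \<alpha> l \<tau>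
    using counts(2)[OF that[unfolded T_def]] by (simp_all add: sat_Dia_eq)
  moreover have "card (nbh M' \<alpha> v') = card (nbh M \<alpha> u)" if "\<alpha> \<in> I" for \<alpha>
    using counts(1)[OF that] .
  ultimately have "gtype_conjuncts P I k T M' v' = gtype_conjuncts P I k T M u"
    unfolding gtype_conjuncts_def eps by (intro arg_cong2[where f="(\<union>)"] refl) (auto; metis)+
  then show ?thesis unfolding \<tau>_def gtype_Cons T_def by simp
qed

end

lemma gtype_eq_ctype_and_unique:
  assumes P: "finite P" and I: "finite I"
  shows "(\<forall>M x. is_model P I M \<and> x \<in> W M \<and> admissible_widths I M x ks \<longrightarrow>
           gtype P I ks M x = ctype P I (length ks) M x)
       \<and> (\<forall>M x \<tau>. is_model P I M \<and> x \<in> W M \<and> admissible_widths I M x ks \<and>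
           \<tau> \<in> types_of_width P I ks \<and> sat M x \<tau> \<longrightarrow> \<tau> = gtype P I ks M x)"
proof (induction ks)
  case Nil
  show ?case using P by (auto simp: types_of_width_def dest: type_eps_eq_of_sat)
next
  case (Cons k ks)
  then show ?case
    using gtype_Cons_eq_ctype[OF P I conjunct1[OF Cons.IH] conjunct2[OF Cons.IH]]
      gtype_Cons_unique[OF P I conjunct1[OF Cons.IH] conjunct2[OF Cons.IH]]
    by auto
qed

lemma gtype_eq_ctype:
  fixes M :: "nat kmodel"
  shows "finite P \<Longrightarrow> finite I \<Longrightarrow> is_model P I M \<Longrightarrow> x \<in> W M \<Longrightarrow> admissible_widths I M x ks \<Longrightarrow>
    gtype P I ks M x = ctype P I (length ks) M x"
  using gtype_eq_ctype_and_unique by blast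

lemma is_full_type_ctype:
  fixes M :: "nat kmodel"
  assumes "finite P" "finite I" "is_model P I M" "w \<in> W M"
  shows "is_full_type P I n (ctype P I n M w)"
proof -
  let ?ks = "replicate n (\<lambda>\<alpha>. Suc (card (W M)))"
  have "admissible_widths I M w ?ks" by (rule admissible_widths_replicate[OF assms(3)])
  moreover have "gtype P I ?ks M w = ctype P I n M w"
    using gtype_eq_ctype[OF assms calculation] by simp
  ultimately show ?thesis unfolding is_full_type_def using assms(3,4) by (metis length_replicate)
qed

section \<open>Computing codes of canonical types\<close>

text \<open>\<open>3\<close> is the tag of \<open>And\<close> in \<open>code\<close>.\<close>

fun conj_code :: "nat list \<Rightarrow> nat" where
  "conj_code [] = 0"
| "conj_code [x] = x"
| "conj_code (x # y # ys) = prod_encode (3, prod_encode (x, conj_code (y # ys)))"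

lemma code_conj_list: "set xs \<subseteq> range code \<Longrightarrow> code (conj_list (map (inv code) xs)) = conj_code xs"
  by (induction xs rule: conj_code.induct) (auto simp: f_inv_into_f prod_encode_def)

lemma code_conj_set: "finite S \<Longrightarrow> code (conj_set S) = conj_code (sorted_list_of_set (code ` S))"
  unfolding conj_set_def by (rule code_conj_list) auto

lemma filter_upt_eq_sorted_list_of_set:
  assumes "finite A" and "\<forall>a\<in>A. a < n"
  shows "filter (\<lambda>x. x \<in> A) [0..<n] = sorted_list_of_set A"
  by (rule sorted_distinct_set_unique[symmetric]) (use assms in \<open>auto intro: sorted_wrt_filter\<close>)

text \<open>Scanning the candidates \<open>x = b, b - 1, \<dots>, 0\<close> and prepending each member of \<open>A\<close> builds the
code of the right-nested conjunction of \<open>A\<close> in increasing order; the accumulator is \<open>0\<close> for the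
empty conjunction and \<open>1 +\<close> its code otherwise.\<close>

lemma rec_nat_conj_scan:
  assumes "finite A" and "\<forall>a\<in>A. a \<le> b"
  shows "rec_nat 0 (\<lambda>j acc. let x = b - j in if x \<in> A then
      (if acc = 0 then x + 1 else prod_encode (3, prod_encode (x, acc - 1)) + 1) else acc) (Suc b) - 1
    = conj_code (sorted_list_of_set A)"
proof -
  define step where "step = (\<lambda>j acc. let x = b - j in if x \<in> A then
      (if acc = 0 then x + 1 else prod_encode (3, prod_encode (x, acc - 1)) + 1) else acc)"
  define acc where "acc L = (if L = [] then 0 else Suc (conj_code L))" for L
  have "rec_nat 0 step j = acc (filter (\<lambda>x. x \<in> A) [Suc b - j..<Suc b])" if "j \<le> Suc b" for j
    using that
  proof (induction j)
    case (Suc j)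
    define x where "x = b - j"
    have "[Suc b - Suc j..<Suc b] = x # [Suc b - j..<Suc b]"
      using Suc.prems unfolding x_def by (simp add: upt_conv_Cons Suc_diff_le del: upt_Suc)
    then show ?case
      using Suc by (cases "filter (\<lambda>x. x \<in> A) [Suc b - j..<Suc b]" rule: remdups_adj.cases)
        (auto simp: step_def acc_def x_def[symmetric] Let_def)
  qed (simp add: acc_def)
  then have "rec_nat 0 step (Suc b) = acc (filter (\<lambda>x. x \<in> A) [0..<Suc b])"
    by (simp only: diff_self_eq_0 order_refl)
  moreover have "filter (\<lambda>x. x \<in> A) [0..<Suc b] = sorted_list_of_set A"
    using assms by (intro filter_upt_eq_sorted_list_of_set) (auto simp: less_Suc_eq_le)
  ultimately have "rec_nat 0 step (Suc b) - 1 = conj_code (sorted_list_of_set A)"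
    by (simp only:) (simp add: acc_def)
  from this[unfolded step_def] show ?thesis .
qed

definition shifted_vars :: "nat \<Rightarrow> aexp list" where
  "shifted_vars k = map (\<lambda>i. V (i + 2)) [0..<k]"

lemma aval_shifted_vars: "length xs = k \<Longrightarrow> map (\<lambda>e. aval e (s # j # xs)) (shifted_vars k) = xs"
  by (rule nth_equalityI) (auto simp: shifted_vars_def)

definition conj_set_code_exp :: "nat \<Rightarrow> aexp \<Rightarrow> aexp \<Rightarrow> aexp" where
  "conj_set_code_exp k B Mem = (let G = shifted_vars k; x = Monus (Call B G) (V 1) in
     Monus (Rec (Plus B (C 1)) (C 0)
        (ite_exp (Call Mem (x # G))
           (ite_exp (not_exp (V 0)) (Plus x (C 1))
              (Plus (pair_exp (C 3) (pair_exp x (Monus (V 0) (C 1)))) (C 1)))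
           (V 0))) (C 1))"

lemma closed_conj_set_code_exp [simp]:
  "closed k B \<Longrightarrow> closed (Suc k) Mem \<Longrightarrow> closed k (conj_set_code_exp k B Mem)"
  by (auto simp: conj_set_code_exp_def shifted_vars_def Let_def)

lemma aval_conj_set_code_exp:
  assumes len: "length xs = k" and S: "finite S"
    and mem: "\<And>x. x \<le> aval B xs \<Longrightarrow> aval Mem (x # xs) \<noteq> 0 \<longleftrightarrow> x \<in> code ` S"
    and bound: "\<And>\<psi>. \<psi> \<in> S \<Longrightarrow> code \<psi> \<le> aval B xs"
  shows "aval (conj_set_code_exp k B Mem) xs = code (conj_set S)"
proof -
  have "aval (conj_set_code_exp k B Mem) xs = rec_nat 0 (\<lambda>j acc. let x = aval B xs - j in
      if x \<in> code ` S then (if acc = 0 then x + 1 else prod_encode (3, prod_encode (x, acc - 1)) + 1)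
      else acc) (Suc (aval B xs)) - 1"
    unfolding conj_set_code_exp_def Let_def using mem
    by (simp add: aval_shifted_vars[OF len] cong: if_cong)
  also have "\<dots> = conj_code (sorted_list_of_set (code ` S))"
    by (rule rec_nat_conj_scan) (use S bound in auto)
  also have "\<dots> = code (conj_set S)"
    by (rule code_conj_set[OF S, symmetric])
  finally show ?thesis .
qed

text \<open>A world \<open>i\<close> of \<open>coded_model N r v\<close> is passed to the expressions below as the
environment \<open>[i, N, r, v]\<close>.\<close>

lemma nbh_coded_model_lt:
  "i < N \<Longrightarrow> nbh (coded_model N r v) \<alpha> i = {u. u < N \<and> prod_encode (\<alpha>, prod_encode (i, u)) \<in> set_decode r}"
  by (auto simp: nbh_coded_model)

lemma finite_nbhs_coded_model: "finite_nbhs I (coded_model N r v)"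
  unfolding finite_nbhs_def nbh_coded_model by auto

fun sat_exp :: "form \<Rightarrow> aexp" where
  "sat_exp Top = C 1"
| "sat_exp (Prop p) = mem_exp (pair_exp (C p) (V 0)) (V 3)"
| "sat_exp (Neg \<psi>) = not_exp (sat_exp \<psi>)"
| "sat_exp (And \<psi>1 \<psi>2) = Times (sat_exp \<psi>1) (sat_exp \<psi>2)"
| "sat_exp (Dia \<alpha> k \<psi>) = le_exp (C k) (Sum (V 1)
     (Times (mem_exp (pair_exp (C \<alpha>) (pair_exp (V 1) (V 0))) (V 3)) (Call (sat_exp \<psi>) [V 0, V 2, V 3, V 4])))"

lemma closed_sat_exp [simp]: "closed 4 (sat_exp \<psi>)"
  by (induction \<psi>) (auto simp: numeral_eq_Suc)

lemma aval_sat_exp: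
  "i < N \<Longrightarrow> aval (sat_exp \<psi>) [i, N, r, v] = of_bool (sat (coded_model N r v) i \<psi>)"
proof (induction \<psi> arbitrary: i)
  case (Dia \<alpha> k \<psi>)
  then show ?case by (simp add: nbh_coded_model_lt Int_def conj_commute)
qed (simp_all add: Val_coded_model)

definition val_exp :: "nat \<Rightarrow> aexp" where
  "val_exp p = mem_exp (pair_exp (C p) (V 1)) (V 4)"

definition literal_test_exp :: "nat \<Rightarrow> aexp" where
  "literal_test_exp p = Plus (Times (eq_exp (V 0) (C (code (Prop p)))) (val_exp p))
     (Times (eq_exp (V 0) (C (code (Neg (Prop p))))) (not_exp (val_exp p)))"

definition type_eps_code_exp :: "nat list \<Rightarrow> aexp" where
  "type_eps_code_exp ps = conj_set_code_exp 4 (C (\<Sum>p\<leftarrow>ps. code (Prop p) + code (Neg (Prop p))))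
     (sg_exp (sum_list_exp (map literal_test_exp ps)))"

lemma closed_type_eps_code_exp [simp]: "closed 4 (type_eps_code_exp ps)"
  unfolding type_eps_code_exp_def
  by (rule closed_conj_set_code_exp) (auto simp: literal_test_exp_def val_exp_def numeral_eq_Suc)

lemma aval_type_eps_code_exp:
  assumes "i < N"
  shows "aval (type_eps_code_exp ps) [i, N, r, v] = code (type_eps (set ps) (coded_model N r v) i)"
  unfolding type_eps_conj_literals type_eps_code_exp_def
proof (rule aval_conj_set_code_exp)
  let ?D = "coded_model N r v"
  have "aval (literal_test_exp p) [x, i, N, r, v] \<noteq> 0 \<longleftrightarrow>
      x = code (Prop p) \<and> i \<in> Val ?D p \<or> x = code (Neg (Prop p)) \<and> i \<notin> Val ?D p" for p x
    using assms by (auto simp: literal_test_exp_def val_exp_def Val_coded_model simp del: code.simps)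
  then show "aval (sg_exp (sum_list_exp (map literal_test_exp ps))) (x # [i, N, r, v]) \<noteq> 0
      \<longleftrightarrow> x \<in> code ` literals (set ps) ?D i" for x
    by (auto simp: literals_def sum_list_eq_0_iff simp del: code.simps)
  show "code \<psi> \<le> aval (C (\<Sum>p\<leftarrow>ps. code (Prop p) + code (Neg (Prop p)))) [i, N, r, v]"
    if \<psi>: "\<psi> \<in> literals (set ps) ?D i" for \<psi>
  proof -
    obtain p where "p \<in> set ps" "\<psi> = Prop p \<or> \<psi> = Neg (Prop p)"
      using \<psi> unfolding literals_def by blast
    then have "code \<psi> \<le> code (Prop p) + code (Neg (Prop p))"
      and "code (Prop p) + code (Neg (Prop p)) \<le> (\<Sum>p\<leftarrow>ps. code (Prop p) + code (Neg (Prop p)))"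
      by (auto simp del: code.simps intro: member_le_sum_list)
    then show ?thesis by simp
  qed
qed (simp_all add: finite_literals)

definition edge_prog :: "nat \<Rightarrow> aexp" where
  "edge_prog \<alpha> = mem_exp (pair_exp (C \<alpha>) (pair_exp (V 0) (V 1))) (V 2)"

text \<open>\<open>2\<close>, \<open>3\<close> and \<open>4\<close> are the tags of \<open>Neg\<close>, \<open>And\<close> and \<open>Dia\<close> in \<open>code\<close>.\<close>

definition dia_eq_code_prog :: "nat \<Rightarrow> aexp" where
  "dia_eq_code_prog \<alpha> = pair_exp (C 3) (pair_exp (pair_exp (C 4) (pair_exp (C \<alpha>) (pair_exp (V 0) (V 1))))
     (pair_exp (C 2) (pair_exp (C 4) (pair_exp (C \<alpha>) (pair_exp (Plus (V 0) (C 1)) (V 1))))))"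

definition succ_count_prog :: "aexp \<Rightarrow> nat \<Rightarrow> aexp" where
  "succ_count_prog c \<alpha> = Sum (V 2)
     (Times (Call (edge_prog \<alpha>) [V 1, V 0, V 4]) (eq_exp (Call c [V 0, V 3, V 4, V 5]) (V 2)))"

definition degree_prog :: "nat \<Rightarrow> aexp" where
  "degree_prog \<alpha> = Sum (V 1) (Call (edge_prog \<alpha>) [V 1, V 0, V 3])"

definition succ_conjunct_prog :: "aexp \<Rightarrow> nat \<Rightarrow> aexp" where
  "succ_conjunct_prog c \<alpha> = Call (dia_eq_code_prog \<alpha>)
     [Call (succ_count_prog c \<alpha>) [V 1, Call c [V 0, V 2, V 3, V 4], V 2, V 3, V 4],
      Call c [V 0, V 2, V 3, V 4]]"

definition degree_conjunct_prog :: "nat \<Rightarrow> aexp" where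
  "degree_conjunct_prog \<alpha> = Call (dia_eq_code_prog \<alpha>) [Call (degree_prog \<alpha>) [V 0, V 1, V 2, V 3], C 0]"

definition modal_conjunct_test_exp :: "aexp \<Rightarrow> nat \<Rightarrow> aexp" where
  "modal_conjunct_test_exp c \<alpha> = Plus
     (Sum (V 2) (Times (Call (edge_prog \<alpha>) [V 2, V 0, V 4])
        (eq_exp (V 1) (Call (succ_conjunct_prog c \<alpha>) [V 0, V 2, V 3, V 4, V 5]))))
     (eq_exp (V 0) (Call (degree_conjunct_prog \<alpha>) [V 1, V 2, V 3, V 4]))"

definition ctype_conjunct_test_exp :: "nat list \<Rightarrow> aexp \<Rightarrow> nat list \<Rightarrow> aexp" where
  "ctype_conjunct_test_exp ps c as =
     sg_exp (Plus (eq_exp (V 0) (Call (type_eps_code_exp ps) [V 1, V 2, V 3, V 4]))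
     (sum_list_exp (map (modal_conjunct_test_exp c) as)))"

definition modal_conjuncts_bound_exp :: "aexp \<Rightarrow> nat \<Rightarrow> aexp" where
  "modal_conjuncts_bound_exp c \<alpha> =
     Plus (Sum (V 1) (Call (succ_conjunct_prog c \<alpha>) [V 0, V 1, V 2, V 3, V 4])) (degree_conjunct_prog \<alpha>)"

definition ctype_conjuncts_bound_exp :: "nat list \<Rightarrow> aexp \<Rightarrow> nat list \<Rightarrow> aexp" where
  "ctype_conjuncts_bound_exp ps c as =
     Plus (type_eps_code_exp ps) (sum_list_exp (map (modal_conjuncts_bound_exp c) as))"

fun ctype_code_exp :: "nat list \<Rightarrow> nat list \<Rightarrow> nat \<Rightarrow> aexp" where
  "ctype_code_exp ps as 0 = type_eps_code_exp ps"
| "ctype_code_exp ps as (Suc n) = conj_set_code_exp 4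
     (ctype_conjuncts_bound_exp ps (ctype_code_exp ps as n) as)
     (ctype_conjunct_test_exp ps (ctype_code_exp ps as n) as)"

lemmas ctype_code_exp_defs = ctype_conjuncts_bound_exp_def ctype_conjunct_test_exp_def
  modal_conjuncts_bound_exp_def modal_conjunct_test_exp_def succ_conjunct_prog_def
  degree_conjunct_prog_def succ_count_prog_def degree_prog_def edge_prog_def dia_eq_code_prog_def

lemma closed_ctype_code_exp [simp]: "closed 4 (ctype_code_exp ps as n)"
  using closed_type_eps_code_exp[of ps, simplified numeral_eq_Suc]
  by (induction n) (auto simp: ctype_code_exp_defs numeral_eq_Suc intro!: closed_conj_set_code_exp)

lemma aval_dia_eq_code_prog: "aval (dia_eq_code_prog \<alpha>) [l, code \<phi>] = code (Dia_eq \<alpha> l \<phi>)"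
  by (simp add: dia_eq_code_prog_def Dia_eq_def)

context
  fixes ps as :: "nat list" and n N r v :: nat and \<sigma> :: "nat \<Rightarrow> form" and c :: aexp
  assumes \<sigma>: "\<sigma> = ctype (set ps) (set as) n (coded_model N r v)"
    and aval_c: "\<And>u. u < N \<Longrightarrow> aval c [u, N, r, v] = code (\<sigma> u)"
begin

lemma aval_edge_prog:
  "i < N \<Longrightarrow> u < N \<Longrightarrow> aval (edge_prog \<alpha>) [i, u, r] = of_bool (u \<in> nbh (coded_model N r v) \<alpha> i)"
  by (simp add: edge_prog_def nbh_coded_model)

lemma aval_succ_count_prog:
  "i < N \<Longrightarrow> u < N \<Longrightarrow>
    aval (succ_count_prog c \<alpha>) [i, code (\<sigma> u), N, r, v] = succ_count \<sigma> (coded_model N r v) \<alpha> i (\<sigma> u)"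
  unfolding succ_count_prog_def succ_count_def
  by (simp add: aval_edge_prog aval_c nbh_coded_model_lt Int_def conj_commute)

lemma aval_degree_prog:
  "i < N \<Longrightarrow> aval (degree_prog \<alpha>) [i, N, r, v] = card (nbh (coded_model N r v) \<alpha> i)"
  unfolding degree_prog_def by (simp add: aval_edge_prog nbh_coded_model_lt Int_def)

lemma aval_succ_conjunct_prog: "i < N \<Longrightarrow> u < N \<Longrightarrow>
    aval (succ_conjunct_prog c \<alpha>) [u, i, N, r, v]
      = code (Dia_eq \<alpha> (succ_count \<sigma> (coded_model N r v) \<alpha> i (\<sigma> u)) (\<sigma> u))"
  unfolding succ_conjunct_prog_def by (simp add: aval_c aval_succ_count_prog aval_dia_eq_code_prog)

lemma aval_degree_conjunct_prog:
  "i < N \<Longrightarrow>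
    aval (degree_conjunct_prog \<alpha>) [i, N, r, v] = code (Dia_eq \<alpha> (card (nbh (coded_model N r v) \<alpha> i)) Top)"
  unfolding degree_conjunct_prog_def
  using aval_dia_eq_code_prog[of \<alpha> _ Top] by (simp add: aval_degree_prog prod_encode_def)

lemma aval_modal_conjunct_test_exp:
  assumes "i < N"
  shows "aval (modal_conjunct_test_exp c \<alpha>) [x, i, N, r, v] \<noteq> 0 \<longleftrightarrow>
    (\<exists>u\<in>nbh (coded_model N r v) \<alpha> i. x = code (Dia_eq \<alpha> (succ_count \<sigma> (coded_model N r v) \<alpha> i (\<sigma> u)) (\<sigma> u)))
    \<or> x = code (Dia_eq \<alpha> (card (nbh (coded_model N r v) \<alpha> i)) Top)"
  using assms unfolding modal_conjunct_test_exp_def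
  by (auto simp: aval_edge_prog aval_succ_conjunct_prog aval_degree_conjunct_prog nbh_coded_model_lt
      simp del: code.simps)

lemma aval_ctype_conjunct_test_exp:
  assumes "i < N"
  shows "aval (ctype_conjunct_test_exp ps c as) [x, i, N, r, v] \<noteq> 0 \<longleftrightarrow>
    x \<in> code ` ctype_conjuncts (set ps) (set as) \<sigma> (coded_model N r v) i"
proof -
  have "aval (ctype_conjunct_test_exp ps c as) [x, i, N, r, v] \<noteq> 0 \<longleftrightarrow>
      x = code (type_eps (set ps) (coded_model N r v) i)
      \<or> (\<exists>\<alpha>\<in>set as. aval (modal_conjunct_test_exp c \<alpha>) [x, i, N, r, v] \<noteq> 0)"
    using assms unfolding ctype_conjunct_test_exp_def by (simp add: aval_type_eps_code_exp)
  also have "\<dots> \<longleftrightarrow> x \<in> code ` ctype_conjuncts (set ps) (set as) \<sigma> (coded_model N r v) i"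
    unfolding aval_modal_conjunct_test_exp[OF assms] ctype_conjuncts_def by (auto simp del: code.simps)
  finally show ?thesis .
qed

lemma code_le_aval_ctype_conjuncts_bound_exp:
  assumes i: "i < N" and \<psi>: "\<psi> \<in> ctype_conjuncts (set ps) (set as) \<sigma> (coded_model N r v) i"
  shows "code \<psi> \<le> aval (ctype_conjuncts_bound_exp ps c as) [i, N, r, v]"
proof -
  define f where "f \<alpha> = (\<Sum>u<N. code (Dia_eq \<alpha> (succ_count \<sigma> (coded_model N r v) \<alpha> i (\<sigma> u)) (\<sigma> u)))
    + code (Dia_eq \<alpha> (card (nbh (coded_model N r v) \<alpha> i)) Top)" for \<alpha>
  have "aval (modal_conjuncts_bound_exp c \<alpha>) [i, N, r, v] = f \<alpha>" for \<alpha>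
    using i unfolding modal_conjuncts_bound_exp_def f_def
    by (simp add: aval_succ_conjunct_prog aval_degree_conjunct_prog)
  then have bound: "aval (ctype_conjuncts_bound_exp ps c as) [i, N, r, v]
      = code (type_eps (set ps) (coded_model N r v) i) + (\<Sum>\<alpha>\<leftarrow>as. f \<alpha>)"
    using i unfolding ctype_conjuncts_bound_exp_def by (simp add: aval_type_eps_code_exp comp_def)
  from \<psi> consider "\<psi> = type_eps (set ps) (coded_model N r v) i"
    | \<alpha> u where "\<alpha> \<in> set as" "u \<in> nbh (coded_model N r v) \<alpha> i"
        "\<psi> = Dia_eq \<alpha> (succ_count \<sigma> (coded_model N r v) \<alpha> i (\<sigma> u)) (\<sigma> u)"
    | \<alpha> where "\<alpha> \<in> set as" "\<psi> = Dia_eq \<alpha> (card (nbh (coded_model N r v) \<alpha> i)) Top"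
    unfolding ctype_conjuncts_def by auto
  then show ?thesis
  proof cases
    case 1
    then show ?thesis unfolding bound by simp
  next
    case (2 \<alpha> u)
    then have "u < N" using nbh_coded_model_lt[OF i] by auto
    then have "code \<psi> \<le> (\<Sum>u<N. code (Dia_eq \<alpha> (succ_count \<sigma> (coded_model N r v) \<alpha> i (\<sigma> u)) (\<sigma> u)))"
      unfolding 2(3) by (intro member_le_sum) auto
    then have "code \<psi> \<le> f \<alpha>" unfolding f_def by (rule trans_le_add1)
    also have "f \<alpha> \<le> (\<Sum>\<alpha>\<leftarrow>as. f \<alpha>)" using 2 by (intro member_le_sum_list) auto
    finally show ?thesis unfolding bound by simp
  next
    case (3 \<alpha>)
    then have "code \<psi> \<le> f \<alpha>" unfolding f_def by simp
    also have "f \<alpha> \<le> (\<Sum>\<alpha>\<leftarrow>as. f \<alpha>)" using 3 by (intro member_le_sum_list) auto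
    finally show ?thesis unfolding bound by simp
  qed
qed

lemma aval_ctype_code_exp_step:
  assumes "i < N"
  shows "aval (conj_set_code_exp 4 (ctype_conjuncts_bound_exp ps c as) (ctype_conjunct_test_exp ps c as))
      [i, N, r, v]
    = code (ctype (set ps) (set as) (Suc n) (coded_model N r v) i)"
  unfolding ctype.simps \<sigma>[symmetric]
proof (rule aval_conj_set_code_exp)
  show "finite (ctype_conjuncts (set ps) (set as) \<sigma> (coded_model N r v) i)"
    by (rule finite_ctype_conjuncts[OF _ finite_nbhs_coded_model]) simp
  show "aval (ctype_conjunct_test_exp ps c as) (x # [i, N, r, v]) \<noteq> 0 \<longleftrightarrow>
      x \<in> code ` ctype_conjuncts (set ps) (set as) \<sigma> (coded_model N r v) i" for x
    by (rule aval_ctype_conjunct_test_exp[OF assms])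
  show "code \<psi> \<le> aval (ctype_conjuncts_bound_exp ps c as) [i, N, r, v]"
    if "\<psi> \<in> ctype_conjuncts (set ps) (set as) \<sigma> (coded_model N r v) i" for \<psi>
    by (rule code_le_aval_ctype_conjuncts_bound_exp[OF assms that])
qed simp

end

lemma aval_ctype_code_exp:
  "i < N \<Longrightarrow>
    aval (ctype_code_exp ps as n) [i, N, r, v] = code (ctype (set ps) (set as) n (coded_model N r v) i)"
proof (induction n arbitrary: i)
  case 0
  then show ?case by (simp add: aval_type_eps_code_exp)
next
  case (Suc n)
  then show ?case unfolding ctype_code_exp.simps by (rule aval_ctype_code_exp_step[OF refl])
qed

section \<open>The disjunction of types\<close>

lemma prod_encode_surj: "\<exists>a b. m = prod_encode (a, b)"
  by (metis prod_decode_inverse surj_pair)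

definition sat_ctypes :: "nat set \<Rightarrow> nat set \<Rightarrow> nat \<Rightarrow> form \<Rightarrow> form set" where
  "sat_ctypes P I n \<phi> = {ctype P I n (coded_model N r v) w | N r v w. w < N \<and> sat (coded_model N r v) w \<phi>}"

definition sat_ctypes_test_exp :: "nat list \<Rightarrow> nat list \<Rightarrow> nat \<Rightarrow> form \<Rightarrow> aexp" where
  "sat_ctypes_test_exp ps as n \<phi> = (let N = fst_exp (V 0); w = fst_exp (snd_exp (V 0));
      r = fst_exp (snd_exp (snd_exp (V 0))); v = snd_exp (snd_exp (snd_exp (V 0))); args = [w, N, r, v] in
     not_exp (Times (lt_exp w N)
       (Times (Call (sat_exp \<phi>) args) (eq_exp (Call (ctype_code_exp ps as n) args) (V 1)))))"

lemma aval_sat_ctypes_test_exp: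
  "aval (sat_ctypes_test_exp ps as n \<phi>) [prod_encode (N, prod_encode (w, prod_encode (r, v))), x] = 0 \<longleftrightarrow>
    w < N \<and> sat (coded_model N r v) w \<phi> \<and> x = code (ctype (set ps) (set as) n (coded_model N r v) w)"
  by (cases "w < N") (auto simp: sat_ctypes_test_exp_def Let_def aval_sat_exp aval_ctype_code_exp)

lemma re_form_set_sat_ctypes:
  assumes "finite P" and "finite I"
  shows "re_form_set (sat_ctypes P I n \<phi>)"
proof -
  define ps as where "ps = sorted_list_of_set P" and "as = sorted_list_of_set I"
  have "code ` sat_ctypes P I n \<phi> = {x. \<exists>m. aval (sat_ctypes_test_exp ps as n \<phi>) [m, x] = 0}"
  proof (intro set_eqI iffI)
    fix x assume "x \<in> code ` sat_ctypes P I n \<phi>"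
    then obtain N r v w where "w < N" "sat (coded_model N r v) w \<phi>"
      and "x = code (ctype P I n (coded_model N r v) w)"
      unfolding sat_ctypes_def by blast
    then have
      "aval (sat_ctypes_test_exp ps as n \<phi>) [prod_encode (N, prod_encode (w, prod_encode (r, v))), x] = 0"
      using assms unfolding aval_sat_ctypes_test_exp ps_def as_def by simp
    then show "x \<in> {x. \<exists>m. aval (sat_ctypes_test_exp ps as n \<phi>) [m, x] = 0}" by (intro CollectI exI)
  next
    fix x assume "x \<in> {x. \<exists>m. aval (sat_ctypes_test_exp ps as n \<phi>) [m, x] = 0}"
    then obtain m where m: "aval (sat_ctypes_test_exp ps as n \<phi>) [m, x] = 0" by blast
    obtain N w r v where "m = prod_encode (N, prod_encode (w, prod_encode (r, v)))"
      using prod_encode_surj by metis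
    with m have "w < N" "sat (coded_model N r v) w \<phi>" "x = code (ctype P I n (coded_model N r v) w)"
      using assms by (simp_all add: aval_sat_ctypes_test_exp ps_def as_def)
    then show "x \<in> code ` sat_ctypes P I n \<phi>"
      unfolding sat_ctypes_def by blast
  qed
  moreover have "closed 2 (sat_ctypes_test_exp ps as n \<phi>)"
    using closed_sat_exp[of \<phi>] closed_ctype_code_exp[of ps as n]
    by (simp add: sat_ctypes_test_exp_def Let_def numeral_eq_Suc)
  ultimately show ?thesis unfolding re_form_set_def by (simp add: re_set_aexp_zeros)
qed

lemma is_full_type_sat_ctypes:
  assumes "finite P" and "finite I" and "\<tau> \<in> sat_ctypes P I n \<phi>"
  shows "is_full_type P I n \<tau>"
proof -
  obtain N r v w where "\<tau> = ctype P I n (coded_model N r v) w" and "w < N"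
    using assms(3) unfolding sat_ctypes_def by blast
  moreover have "is_model P I (coded_model N r v)" using \<open>w < N\<close> by (intro is_model_coded_model) simp
  ultimately show ?thesis using assms(1,2) by (simp add: is_full_type_ctype)
qed

lemma sat_iff_sat_ctypes:
  fixes M :: "'w kmodel"
  assumes P: "finite P" and I: "finite I" and \<phi>: "wff P I \<phi>" "md \<phi> \<le> n"
    and M: "is_model P I M" and w: "w \<in> W M"
  shows "sat M w \<phi> \<longleftrightarrow> (\<exists>\<tau>\<in>sat_ctypes P I n \<phi>. sat M w \<tau>)"
proof -
  obtain f N r v where img: "f ` W M = {0..<N}"
    and iso: "\<And>\<psi> x. wff P I \<psi> \<Longrightarrow> x \<in> W M \<Longrightarrow> sat (coded_model N r v) (f x) \<psi> \<longleftrightarrow> sat M x \<psi>"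
    by (rule coded_model_iso[OF P I M]) (rule that)
  let ?D = "coded_model N r v"
  have wff_coded_ctype: "wff P I (ctype P I n (coded_model N' r' v') u)" for N' r' v' u
    by (rule wff_ctype[OF P I finite_nbhs_coded_model])
  show ?thesis
  proof
    assume "sat M w \<phi>"
    moreover have "f w < N" using img w by auto
    ultimately have "ctype P I n ?D (f w) \<in> sat_ctypes P I n \<phi>"
      using iso[OF \<phi>(1) w] unfolding sat_ctypes_def by blast
    moreover have "sat M w (ctype P I n ?D (f w))"
      using iso[OF wff_coded_ctype w] sat_ctype_self[OF P I finite_nbhs_coded_model] by blast
    ultimately show "\<exists>\<tau>\<in>sat_ctypes P I n \<phi>. sat M w \<tau>" by blast
  next
    assume "\<exists>\<tau>\<in>sat_ctypes P I n \<phi>. sat M w \<tau>"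
    then obtain N0 r0 v0 w0 where sat0: "sat (coded_model N0 r0 v0) w0 \<phi>"
      and "sat M w (ctype P I n (coded_model N0 r0 v0) w0)"
      unfolding sat_ctypes_def by blast
    then have "sat ?D (f w) (ctype P I n (coded_model N0 r0 v0) w0)"
      using iso[OF wff_coded_ctype w] by blast
    then have "ctype P I n ?D (f w) = ctype P I n (coded_model N0 r0 v0) w0"
      by (rule sat_ctype_iff[OF P I finite_nbhs_coded_model finite_nbhs_coded_model, THEN iffD1])
    then have "sat ?D (f w) \<phi> \<longleftrightarrow> sat (coded_model N0 r0 v0) w0 \<phi>"
      by (rule sat_eq_of_ctype_eq[OF P I \<phi> finite_nbhs_coded_model finite_nbhs_coded_model])
    then show "sat M w \<phi>" using sat0 iso[OF \<phi>(1) w] by blast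
  qed
qed

theorem lemma1:
  fixes \<Pi> :: "nat set" and a n :: nat and \<phi> :: form
  assumes "finite \<Pi>" and "0 < a"
    and "wff \<Pi> {1..a} \<phi>" and "md \<phi> = n"
  shows "\<exists>\<Phi>. re_form_set \<Phi> \<and> (\<forall>\<tau>\<in>\<Phi>. is_full_type \<Pi> {1..a} n \<tau>) \<and>
           (\<forall>(M :: 'w kmodel) w. is_model \<Pi> {1..a} M \<and> w \<in> W M \<longrightarrow>
              (sat M w \<phi> \<longleftrightarrow> (\<exists>\<tau>\<in>\<Phi>. sat M w \<tau>)))"
proof (intro exI[of _ "sat_ctypes \<Pi> {1..a} n \<phi>"] conjI)
  have I: "finite {1..a}" by simp
  show "re_form_set (sat_ctypes \<Pi> {1..a} n \<phi>)"
    by (rule re_form_set_sat_ctypes[OF assms(1) I])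
  show "\<forall>\<tau>\<in>sat_ctypes \<Pi> {1..a} n \<phi>. is_full_type \<Pi> {1..a} n \<tau>"
  proof
    fix \<tau> assume "\<tau> \<in> sat_ctypes \<Pi> {1..a} n \<phi>"
    then show "is_full_type \<Pi> {1..a} n \<tau>" by (rule is_full_type_sat_ctypes[OF assms(1) I])
  qed
  show "\<forall>(M :: 'w kmodel) w. is_model \<Pi> {1..a} M \<and> w \<in> W M \<longrightarrow>
      (sat M w \<phi> \<longleftrightarrow> (\<exists>\<tau>\<in>sat_ctypes \<Pi> {1..a} n \<phi>. sat M w \<tau>))"
  proof (intro allI impI)
    fix M :: "'w kmodel" and w
    assume "is_model \<Pi> {1..a} M \<and> w \<in> W M"
    then show "sat M w \<phi> \<longleftrightarrow> (\<exists>\<tau>\<in>sat_ctypes \<Pi> {1..a} n \<phi>. sat M w \<tau>)"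
      by (elim conjE) (rule sat_iff_sat_ctypes[OF assms(1) I assms(3) eq_refl[OF assms(4)]])
  qed
qed

end
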